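(* Consider the FIR system $y_t = b_1 u_{t-1} + \dots + b_N u_{t-N} + w_t$ satisfying the assumptions below, and run the following procedure (Algorithm 4). Fix a threshold $c_u$ such that $\mathbb{E}[u \mid u > c_u] \neq \mathbb{E}[u]$ and $\mathbb{E}[u \mid u > c_u] \neq (1-N)\mathbb{E}[u]$, where $u$ has the common distribution of the $u_t$, and step sizes $\alpha_j > 0$ with $\sum_j \alpha_j = \infty$, $\sum_j \alpha_j^2 < \infty$. Let $\tau_1 < \tau_2 < \dots$ be the successive times $t \ge 1$ with $t \bmod (N+2) \in \{1,\dots,N\}$ and $u_t > c_u$, and for $n=1,\dots,N$, $i \ge 1$ let $d_{n,i} = \frac{1}{i}\sum_{i'=1}^{i} y_{\tau_{i'}+n}$ (computed at the output quantizer). At the input quantizer let $e_{1,t} = \frac{1}{t}\sum_{t'=1}^t u_{t'}$, let $t_1 < t_2 < \dots$ be all times $t\ge1$ with $u_t > c_u$ and $e_{2,k} = \frac{1}{k}\sum_{k'=1}^k u_{t_{k'}}$. For $j \ge 1$ let $s_j = \tau_{Nj}$ and $k_j$ the number of times $t \le s_j$ with $u_t > c_u$. With zero initial values, define for $j \ge 1$ \[ \hat{d}_{n,j+1} = \hat{d}_{n,j} + \alpha_j\,\mathrm{sgn}(d_{n,Nj} - \hat{d}_{n,j}),\ n=1,\dots,N,\quad \hat{e}_{1,j+1} = \hat{e}_{1,j} + \alpha_j\,\mathrm{sgn}(e_{1,s_j} - \hat{e}_{1,j}),\quad \hat{e}_{2,j+1} = \hat{e}_{2,j} + \alpha_j\,\mathrm{sgn}(e_{2,k_j}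 - \hat{e}_{2,j}), \] (only the sign values being transmitted to the estimator), let $\mathbf{U}_j$ be the $N\times N$ matrix with all diagonal entries $\hat{e}_{2,j}$ and all off-diagonal entries $\hat{e}_{1,j}$, and set $[\hat{b}_{1,j},\dots,\hat{b}_{N,j}]^T = \mathbf{U}_j^{-1}[\hat{d}_{1,j},\dots,\hat{d}_{N,j}]^T$ if $\mathbf{U}_j$ is invertible and $=0$ otherwise. Then $\hat{b}_{n,j} \to b_n$ almost surely as $j \to \infty$, for every $n=1,\dots,N$.
   Context: Standing assumptions: the input and output quantizers have computational and storage capabilities (they can compute the running averages described, with access to the unquantized $u_t$, $y_t$); $\{u_t\}$ and $\{w_t\}$ are i.i.d. sequences, mutually independent, and $w_t$ has zero mean; the model order $N$ is known; the input distribution is not assumed known to the estimator ($\mathbb{E}[u]$ and $\mathbb{E}[u\mid u>c_u]$ are assumed to exist). The function $\mathrm{sgn}$ is defined by $\mathrm{sgn}(x) = -1$ for $x<0$ and $\mathrm{sgn}(x) = 1$ for $x>0$ (the paper does not specify a value at $0$). *)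

theory Defs
  imports "HOL-Probability.Probability" "Jordan_Normal_Form.Gauss_Jordan_Elimination"
begin

definition fir_out :: "(nat \<Rightarrow> real) \<Rightarrow> nat \<Rightarrow> (int \<Rightarrow> 'a \<Rightarrow> real) \<Rightarrow> (int \<Rightarrow> 'a \<Rightarrow> real)
    \<Rightarrow> int \<Rightarrow> 'a \<Rightarrow> real" where
  "fir_out b N u w t \<omega> = (\<Sum>n=1..N. b n * u (t - int n) \<omega>) + w t \<omega>"

definition cond_exp_gt :: "'a measure \<Rightarrow> ('a \<Rightarrow> real) \<Rightarrow> real \<Rightarrow> real" where
  "cond_exp_gt M X c =
     (LINT x|M. indicator {\<omega> \<in> space M. X \<omega> > c} x * X x) / measure M {\<omega> \<in> space M. X \<omega> > c}"

definition tau :: "nat \<Rightarrow> real \<Rightarrow> (int \<Rightarrow> 'a \<Rightarrow> real) \<Rightarrow> 'a \<Rightarrow> nat \<Rightarrow> nat" where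
  "tau N c u \<omega> i = enumerate {t::nat. 1 \<le> t \<and> t mod (N+2) \<in> {1..N} \<and> u (int t) \<omega> > c} (i - 1)"

definition d_avg :: "(nat \<Rightarrow> real) \<Rightarrow> nat \<Rightarrow> real \<Rightarrow> (int \<Rightarrow> 'a \<Rightarrow> real) \<Rightarrow> (int \<Rightarrow> 'a \<Rightarrow> real)
    \<Rightarrow> nat \<Rightarrow> nat \<Rightarrow> 'a \<Rightarrow> real" where
  "d_avg b N c u w n i \<omega> =
     (\<Sum>i'=1..i. fir_out b N u w (int (tau N c u \<omega> i' + n)) \<omega>) / real i"

definition e1_avg :: "(int \<Rightarrow> 'a \<Rightarrow> real) \<Rightarrow> nat \<Rightarrow> 'a \<Rightarrow> real" where
  "e1_avg u t \<omega> = (\<Sum>t'=1..t. u (int t') \<omega>) / real t"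

definition exc_time :: "real \<Rightarrow> (int \<Rightarrow> 'a \<Rightarrow> real) \<Rightarrow> 'a \<Rightarrow> nat \<Rightarrow> nat" where
  "exc_time c u \<omega> k = enumerate {t::nat. 1 \<le> t \<and> u (int t) \<omega> > c} (k - 1)"

definition e2_avg :: "real \<Rightarrow> (int \<Rightarrow> 'a \<Rightarrow> real) \<Rightarrow> nat \<Rightarrow> 'a \<Rightarrow> real" where
  "e2_avg c u k \<omega> = (\<Sum>k'=1..k. u (int (exc_time c u \<omega> k')) \<omega>) / real k"

definition s_time :: "nat \<Rightarrow> real \<Rightarrow> (int \<Rightarrow> 'a \<Rightarrow> real) \<Rightarrow> 'a \<Rightarrow> nat \<Rightarrow> nat" where
  "s_time N c u \<omega> j = tau N c u \<omega> (N * j)"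

definition k_count :: "nat \<Rightarrow> real \<Rightarrow> (int \<Rightarrow> 'a \<Rightarrow> real) \<Rightarrow> 'a \<Rightarrow> nat \<Rightarrow> nat" where
  "k_count N c u \<omega> j = card {t::nat. 1 \<le> t \<and> t \<le> s_time N c u \<omega> j \<and> u (int t) \<omega> > c}"

text \<open>Sign-error recursion: sa_rec k represents the estimate with index k+1;
  sa_rec 0 = 0 (zero initial value), and
  hat_{j+1} = hat_j + alpha_j * sg (x_j - hat_j).\<close>
fun sa_rec :: "(real \<Rightarrow> real) \<Rightarrow> (nat \<Rightarrow> real) \<Rightarrow> (nat \<Rightarrow> real) \<Rightarrow> nat \<Rightarrow> real" where
  "sa_rec sg \<alpha> x 0 = 0"
| "sa_rec sg \<alpha> x (Suc k) = sa_rec sg \<alpha> x k + \<alpha> (Suc k) * sg (x (Suc k) - sa_rec sg \<alpha> x k)"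

text \<open>Estimate with index j >= 1 (index 0 is a dummy equal to index 1).\<close>
definition sa_hat :: "(real \<Rightarrow> real) \<Rightarrow> (nat \<Rightarrow> real) \<Rightarrow> (nat \<Rightarrow> real) \<Rightarrow> nat \<Rightarrow> real" where
  "sa_hat sg \<alpha> x j = sa_rec sg \<alpha> x (j - 1)"

definition dhat :: "(real \<Rightarrow> real) \<Rightarrow> (nat \<Rightarrow> real) \<Rightarrow> (nat \<Rightarrow> real) \<Rightarrow> nat \<Rightarrow> real
   \<Rightarrow> (int \<Rightarrow> 'a \<Rightarrow> real) \<Rightarrow> (int \<Rightarrow> 'a \<Rightarrow> real) \<Rightarrow> nat \<Rightarrow> nat \<Rightarrow> 'a \<Rightarrow> real" where
  "dhat sg \<alpha> b N c u w n j \<omega> = sa_hat sg \<alpha> (\<lambda>j. d_avg b N c u w n (N * j) \<omega>) j"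

definition e1hat :: "(real \<Rightarrow> real) \<Rightarrow> (nat \<Rightarrow> real) \<Rightarrow> nat \<Rightarrow> real \<Rightarrow> (int \<Rightarrow> 'a \<Rightarrow> real)
   \<Rightarrow> nat \<Rightarrow> 'a \<Rightarrow> real" where
  "e1hat sg \<alpha> N c u j \<omega> = sa_hat sg \<alpha> (\<lambda>j. e1_avg u (s_time N c u \<omega> j) \<omega>) j"

definition e2hat :: "(real \<Rightarrow> real) \<Rightarrow> (nat \<Rightarrow> real) \<Rightarrow> nat \<Rightarrow> real \<Rightarrow> (int \<Rightarrow> 'a \<Rightarrow> real)
   \<Rightarrow> nat \<Rightarrow> 'a \<Rightarrow> real" where
  "e2hat sg \<alpha> N c u j \<omega> = sa_hat sg \<alpha> (\<lambda>j. e2_avg c u (k_count N c u \<omega> j) \<omega>) j"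

definition U_mat :: "(real \<Rightarrow> real) \<Rightarrow> (nat \<Rightarrow> real) \<Rightarrow> nat \<Rightarrow> real \<Rightarrow> (int \<Rightarrow> 'a \<Rightarrow> real)
   \<Rightarrow> nat \<Rightarrow> 'a \<Rightarrow> real mat" where
  "U_mat sg \<alpha> N c u j \<omega> =
     mat N N (\<lambda>(p, q). if p = q then e2hat sg \<alpha> N c u j \<omega> else e1hat sg \<alpha> N c u j \<omega>)"

definition bhat :: "(real \<Rightarrow> real) \<Rightarrow> (nat \<Rightarrow> real) \<Rightarrow> (nat \<Rightarrow> real) \<Rightarrow> nat \<Rightarrow> real
   \<Rightarrow> (int \<Rightarrow> 'a \<Rightarrow> real) \<Rightarrow> (int \<Rightarrow> 'a \<Rightarrow> real) \<Rightarrow> nat \<Rightarrow> nat \<Rightarrow> 'a \<Rightarrow> real" where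
  "bhat sg \<alpha> b N c u w n j \<omega> =
     (let dv = vec N (\<lambda>p. dhat sg \<alpha> b N c u w (p + 1) j \<omega>) in
      case mat_inverse (U_mat sg \<alpha> N c u j \<omega>) of
        Some B \<Rightarrow> (B *\<^sub>v dv) $ (n - 1)
      | None \<Rightarrow> 0)"

end

theory Submission
  imports Defs "Jordan_Normal_Form.Determinant"
begin

text \<open>
  Every estimate is a sign-error stochastic approximation driven by a sample average, and such a
  recursion with vanishing, non-summable step sizes tracks any convergent input; so it suffices
  that the averages \<open>d\<^sub>n\<^sub>,\<^sub>N\<^sub>j\<close>, \<open>e\<^sub>1\<^sub>,\<^sub>s\<^sub>j\<close>, \<open>e\<^sub>2\<^sub>,\<^sub>k\<^sub>j\<close> converge almost surely.  Each of them is
  a ratio of time averages of functions of two coordinates of the independent family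
  \<open>(u\<^sub>t, w\<^sub>t)\<close>, weighted periodically in \<open>t\<close>.  Within a residue class modulo the period these
  summands are pairwise independent and identically distributed, so Etemadi's strong law of
  large numbers, which needs only pairwise independence and follows by truncation, Chebyshev's
  inequality and Borel--Cantelli along geometric subsequences, applies classwise.  The limits
  are \<open>d = U b\<close>, \<open>E u\<close> and \<open>E [u | u > c]\<close>, where \<open>U = (E [u | u > c] - E u) I + E u 1 1\<^sup>T\<close>;
  the two conditions on \<open>c\<close> make \<open>U\<close> invertible, and the explicit inverse of such matrices is
  continuous in the entries, so \<open>U\<^sub>j\<^sup>-\<^sup>1 d\<^sub>j \<rightarrow> b\<close>.
\<close>

section \<open>Averages and geometric subsequences\<close>

lemma cesaro_tendsto:
  fixes a :: "nat \<Rightarrow> real"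
  assumes "a \<longlonglongrightarrow> L"
  shows "(\<lambda>n. (\<Sum>i<n. a i) / real n) \<longlonglongrightarrow> L"
proof (rule LIMSEQ_I)
  fix r :: real assume r: "r > 0"
  obtain K where K: "\<And>i. i \<ge> K \<Longrightarrow> \<bar>a i - L\<bar> < r / 2"
    using LIMSEQ_D[OF assms, of "r / 2"] r by auto
  define C where "C = (\<Sum>i<K. \<bar>a i - L\<bar>)"
  obtain n0 :: nat where n0: "real n0 > 2 * C / r"
    using reals_Archimedean2 by blast
  have "\<bar>(\<Sum>i<n. a i) / real n - L\<bar> < r" if n: "n \<ge> max (Suc K) (Suc n0)" for n
  proof -
    have n_pos: "real n > 0" using n by simp
    have "\<bar>\<Sum>i<n. a i - L\<bar> \<le> (\<Sum>i<n. \<bar>a i - L\<bar>)"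
      by (rule sum_abs)
    also have "\<dots> = C + (\<Sum>i\<in>{K..<n}. \<bar>a i - L\<bar>)"
      using n by (simp add: C_def lessThan_atLeast0 sum.atLeastLessThan_concat)
    also have "(\<Sum>i\<in>{K..<n}. \<bar>a i - L\<bar>) \<le> (\<Sum>i\<in>{K..<n}. r / 2)"
      using K by (intro sum_mono) (simp add: less_imp_le)
    also have "\<dots> \<le> real n * (r / 2)"
      using r by (simp add: mult_right_mono)
    finally have "\<bar>\<Sum>i<n. a i - L\<bar> / real n \<le> (C + real n * (r / 2)) / real n"
      using n_pos by (simp add: divide_right_mono)
    also have "\<dots> = C / real n + r / 2"
      using n_pos by (simp add: field_simps)
    moreover have "C / real n < r / 2"
    proof -
      have "2 * C / r < real n"
        using n n0 by simp
      then show ?thesis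
        using n_pos r by (simp add: field_simps)
    qed
    moreover have "(\<Sum>i<n. a i) / real n - L = (\<Sum>i<n. a i - L) / real n"
      using n_pos by (simp add: sum_subtractf field_simps)
    ultimately show ?thesis by (simp add: abs_div)
  qed
  then show "\<exists>n0. \<forall>n\<ge>n0. norm ((\<Sum>i<n. a i) / real n - L) < r"
    by auto
qed

lemma average_diff_tendsto_zero:
  fixes f g :: "nat \<Rightarrow> real"
  assumes "eventually (\<lambda>i. f i = g i) sequentially"
  shows "(\<lambda>n. (\<Sum>i<n. f i) / real n - (\<Sum>i<n. g i) / real n) \<longlonglongrightarrow> 0"
proof -
  obtain K where K: "\<And>i. i \<ge> K \<Longrightarrow> f i = g i"
    using assms by (auto simp: eventually_sequentially)
  define C where "C = (\<Sum>i<K. f i - g i)"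
  have "(\<Sum>i<n. f i) - (\<Sum>i<n. g i) = C" if "n \<ge> K" for n
  proof -
    have "(\<Sum>i<n. f i - g i) = C + (\<Sum>i\<in>{K..<n}. f i - g i)"
      using that by (simp add: C_def lessThan_atLeast0 sum.atLeastLessThan_concat)
    then show ?thesis
      using K by (simp add: sum_subtractf)
  qed
  then have "eventually (\<lambda>n. C / real n = (\<Sum>i<n. f i) / real n - (\<Sum>i<n. g i) / real n) sequentially"
    unfolding eventually_sequentially by (metis diff_divide_distrib)
  then show ?thesis
    by (rule Lim_transform_eventually[OF lim_const_over_n])
qed

lemma tendsto_of_bounds_with_factors:
  fixes x \<beta> :: "nat \<Rightarrow> real"
  assumes \<beta>: "\<beta> \<longlonglongrightarrow> 1"
    and bounds: "\<And>j \<epsilon>. \<epsilon> > 0 \<Longrightarrow>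
      eventually (\<lambda>m. (\<mu> - \<epsilon>) / (\<beta> j)\<^sup>2 \<le> x m \<and> x m \<le> (\<mu> + \<epsilon>) * (\<beta> j)\<^sup>2) sequentially"
  shows "x \<longlonglongrightarrow> \<mu>"
proof (rule order_tendstoI)
  fix a assume "a > \<mu>"
  define \<epsilon> where "\<epsilon> = (a - \<mu>) / 2"
  have "(\<lambda>j. (\<mu> + \<epsilon>) * (\<beta> j)\<^sup>2) \<longlonglongrightarrow> (\<mu> + \<epsilon>) * 1\<^sup>2"
    by (intro tendsto_intros \<beta>)
  moreover have "(\<mu> + \<epsilon>) * 1\<^sup>2 < a"
    using \<open>a > \<mu>\<close> by (simp add: \<epsilon>_def field_simps)
  ultimately obtain j where "(\<mu> + \<epsilon>) * (\<beta> j)\<^sup>2 < a"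
    by (metis (no_types, lifting) eventually_sequentially order.refl order_tendstoD(2))
  moreover have "\<epsilon> > 0"
    using \<open>a > \<mu>\<close> by (simp add: \<epsilon>_def)
  ultimately show "eventually (\<lambda>m. x m < a) sequentially"
    using bounds[of \<epsilon> j] by (auto elim: eventually_mono)
next
  fix a assume "a < \<mu>"
  define \<epsilon> where "\<epsilon> = (\<mu> - a) / 2"
  have "(\<lambda>j. (\<mu> - \<epsilon>) / (\<beta> j)\<^sup>2) \<longlonglongrightarrow> (\<mu> - \<epsilon>) / 1\<^sup>2"
    by (intro tendsto_intros \<beta>) simp
  moreover have "a < (\<mu> - \<epsilon>) / 1\<^sup>2"
    using \<open>a < \<mu>\<close> by (simp add: \<epsilon>_def field_simps)
  ultimately obtain j where "a < (\<mu> - \<epsilon>) / (\<beta> j)\<^sup>2"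
    by (metis (no_types, lifting) eventually_sequentially order.refl order_tendstoD(1))
  moreover have "\<epsilon> > 0"
    using \<open>a < \<mu>\<close> by (simp add: \<epsilon>_def)
  ultimately show "eventually (\<lambda>m. a < x m) sequentially"
    using bounds[of \<epsilon> j] by (auto elim: eventually_mono)
qed

definition floor_pow :: "real \<Rightarrow> nat \<Rightarrow> nat" where
  "floor_pow \<beta> n = nat \<lfloor>\<beta> ^ n\<rfloor>"

lemma floor_pow_ge_1: "\<beta> \<ge> 1 \<Longrightarrow> floor_pow \<beta> n \<ge> 1"
  unfolding floor_pow_def by (simp add: one_le_power le_nat_floor)

lemma floor_pow_le: "\<beta> \<ge> 0 \<Longrightarrow> real (floor_pow \<beta> n) \<le> \<beta> ^ n"
  unfolding floor_pow_def by simp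

lemma floor_pow_gt: "\<beta> \<ge> 0 \<Longrightarrow> real (floor_pow \<beta> n) > \<beta> ^ n - 1"
  unfolding floor_pow_def by simp

lemma floor_pow_ge_half: "\<beta> \<ge> 1 \<Longrightarrow> real (floor_pow \<beta> n) \<ge> \<beta> ^ n / 2"
  using floor_pow_gt[of \<beta> n] floor_pow_ge_1[of \<beta> n] by simp

lemma filterlim_floor_pow:
  assumes \<beta>: "\<beta> > 1"
  shows "filterlim (floor_pow \<beta>) at_top sequentially"
  unfolding filterlim_at_top
proof
  fix Z :: nat
  obtain n0 where n0: "real Z + 1 < \<beta> ^ n0"
    using real_arch_pow[OF \<beta>] by blast
  have "Z \<le> floor_pow \<beta> n" if "n \<ge> n0" for n
  proof -
    have "\<beta> ^ n0 \<le> \<beta> ^ n"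
      using that \<beta> by (simp add: power_increasing)
    then have "real Z < real (floor_pow \<beta> n)"
      using n0 floor_pow_gt[of \<beta> n] \<beta> by linarith
    then show ?thesis
      by simp
  qed
  then show "eventually (\<lambda>n. Z \<le> floor_pow \<beta> n) sequentially"
    unfolding eventually_sequentially by blast
qed

lemma eventually_floor_pow_Suc_le:
  assumes \<beta>: "\<beta> > 1"
  shows "eventually (\<lambda>n. real (floor_pow \<beta> (Suc n)) \<le> \<beta>\<^sup>2 * real (floor_pow \<beta> n)) sequentially"
proof -
  obtain n0 where n0: "\<beta> / (\<beta> - 1) < \<beta> ^ n0"
    using real_arch_pow[OF \<beta>] by blast
  have "real (floor_pow \<beta> (Suc n)) \<le> \<beta>\<^sup>2 * real (floor_pow \<beta> n)" if "n \<ge> n0" for n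
  proof -
    have "\<beta> ^ n0 \<le> \<beta> ^ n"
      using that \<beta> by (simp add: power_increasing)
    then have "\<beta> / (\<beta> - 1) < \<beta> ^ n"
      using n0 by simp
    then have "\<beta> ^ n / \<beta> \<le> \<beta> ^ n - 1"
      using \<beta> by (simp add: field_simps)
    then have "\<beta> ^ n / \<beta> \<le> real (floor_pow \<beta> n)"
      using floor_pow_gt[of \<beta> n] \<beta> by simp
    then have "\<beta> ^ Suc n \<le> \<beta>\<^sup>2 * real (floor_pow \<beta> n)"
      using \<beta> by (simp add: field_simps power2_eq_square)
    then show ?thesis
      using floor_pow_le[of \<beta> "Suc n"] \<beta> by simp
  qed
  then show ?thesis
    unfolding eventually_sequentially by blast
qed

lemma exists_bracketing_index:
  fixes k :: "nat \<Rightarrow> nat"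
  assumes "filterlim k at_top sequentially" and "k n0 \<le> m"
  shows "\<exists>n\<ge>n0. k n \<le> m \<and> m < k (Suc n)"
proof (rule ccontr)
  assume "\<not> ?thesis"
  then have step: "k n \<le> m \<Longrightarrow> k (Suc n) \<le> m" if "n \<ge> n0" for n
    using that by (simp add: not_less)
  have below: "k n \<le> m" if "n \<ge> n0" for n
    using that by (induction n rule: dec_induct) (use assms(2) step in auto)
  obtain K where "\<And>n. n \<ge> K \<Longrightarrow> Suc m \<le> k n"
    using assms(1) unfolding filterlim_at_top eventually_sequentially by blast
  then obtain n where "n \<ge> n0" and "k n > m"
    by (metis Suc_le_lessD max.cobounded1 max.cobounded2)
  then show False
    using below by (simp add: not_le[symmetric])
qed

lemma average_le_bracketed:
  fixes S :: "nat \<Rightarrow> real" and \<beta> :: real and k k' m :: nat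
  assumes mono: "mono S" and nonneg: "\<And>m. S m \<ge> 0"
    and k: "k \<ge> 1" "k \<le> m" "m < k'" "real k' \<le> \<beta>\<^sup>2 * k"
    and close: "\<bar>S k' / k' - \<mu>\<bar> < \<epsilon>"
  shows "S m / m \<le> (\<mu> + \<epsilon>) * \<beta>\<^sup>2"
proof -
  have upper_k': "S k' < (\<mu> + \<epsilon>) * k'"
    using close k by (simp add: abs_less_iff field_simps)
  have "\<mu> + \<epsilon> > 0"
  proof (rule ccontr)
    assume "\<not> \<mu> + \<epsilon> > 0"
    then have "(\<mu> + \<epsilon>) * k' \<le> 0"
      by (simp add: mult_nonpos_nonneg)
    with upper_k' nonneg[of k'] show False
      by linarith
  qed
  have "S m \<le> S k'"
    using monoD[OF mono] k by simp
  also have "\<dots> \<le> (\<mu> + \<epsilon>) * k'"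
    using upper_k' by simp
  also have "\<dots> \<le> (\<mu> + \<epsilon>) * (\<beta>\<^sup>2 * k)"
    using k \<open>\<mu> + \<epsilon> > 0\<close> by (simp add: mult_left_mono)
  also have "\<dots> \<le> (\<mu> + \<epsilon>) * (\<beta>\<^sup>2 * m)"
    using k \<open>\<mu> + \<epsilon> > 0\<close> by (simp add: mult_left_mono)
  finally show ?thesis
    using k by (simp add: field_simps)
qed

lemma average_ge_bracketed:
  fixes S :: "nat \<Rightarrow> real" and \<beta> :: real and k k' m :: nat
  assumes mono: "mono S" and nonneg: "\<And>m. S m \<ge> 0" and \<beta>: "\<beta> > 0"
    and k: "k \<ge> 1" "k \<le> m" "m < k'" "real k' \<le> \<beta>\<^sup>2 * k"
    and close: "\<bar>S k / k - \<mu>\<bar> < \<epsilon>"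
  shows "(\<mu> - \<epsilon>) / \<beta>\<^sup>2 \<le> S m / m"
proof (cases "\<mu> - \<epsilon> \<le> 0")
  case True
  then have "(\<mu> - \<epsilon>) / \<beta>\<^sup>2 \<le> 0"
    using \<beta> by (simp add: divide_nonpos_pos)
  moreover have "0 \<le> S m / m"
    using nonneg[of m] by simp
  ultimately show ?thesis
    by linarith
next
  case False
  have "(\<mu> - \<epsilon>) * (m / \<beta>\<^sup>2) \<le> (\<mu> - \<epsilon>) * k"
    using False k \<beta> by (intro mult_left_mono) (auto simp: field_simps)
  also have "\<dots> < S k"
    using close k by (simp add: abs_less_iff field_simps)
  also have "\<dots> \<le> S m"
    using monoD[OF mono] k by simp
  finally show ?thesis
    using k \<beta> by (simp add: field_simps)
qed

lemma average_bounds_from_floor_pow: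
  fixes S :: "nat \<Rightarrow> real"
  assumes mono: "mono S" and nonneg: "\<And>m. S m \<ge> 0" and \<beta>: "\<beta> > 1" and \<epsilon>: "\<epsilon> > 0"
    and lim: "(\<lambda>n. S (floor_pow \<beta> n) / floor_pow \<beta> n) \<longlonglongrightarrow> \<mu>"
  shows "eventually (\<lambda>m. (\<mu> - \<epsilon>) / \<beta>\<^sup>2 \<le> S m / m \<and> S m / m \<le> (\<mu> + \<epsilon>) * \<beta>\<^sup>2) sequentially"
proof -
  let ?k = "floor_pow \<beta>"
  have "eventually (\<lambda>n. \<bar>S (?k n) / ?k n - \<mu>\<bar> < \<epsilon> \<and> ?k (Suc n) \<le> \<beta>\<^sup>2 * ?k n) sequentially"
    using tendstoD[OF lim \<epsilon>] eventually_floor_pow_Suc_le[OF \<beta>]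
    by eventually_elim (simp add: dist_real_def)
  then obtain n0 where n0: "\<And>n. n \<ge> n0 \<Longrightarrow> \<bar>S (?k n) / ?k n - \<mu>\<bar> < \<epsilon> \<and> ?k (Suc n) \<le> \<beta>\<^sup>2 * ?k n"
    unfolding eventually_sequentially by blast
  have "(\<mu> - \<epsilon>) / \<beta>\<^sup>2 \<le> S m / m \<and> S m / m \<le> (\<mu> + \<epsilon>) * \<beta>\<^sup>2" if m: "m \<ge> ?k n0" for m
  proof -
    obtain n where n: "n \<ge> n0" and kn: "?k n \<le> m" and kSn: "m < ?k (Suc n)"
      using exists_bracketing_index[OF filterlim_floor_pow[OF \<beta>] m] by blast
    have "\<beta> > 0" and "?k n \<ge> 1"
      using floor_pow_ge_1[of \<beta> n] \<beta> by auto
    with n n0[of n] n0[of "Suc n"] show ?thesis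
      using average_le_bracketed[OF mono nonneg _ kn kSn] average_ge_bracketed[OF mono nonneg _ _ kn kSn]
      by simp
  qed
  then show ?thesis
    unfolding eventually_sequentially by blast
qed

definition trunc_at :: "real \<Rightarrow> real \<Rightarrow> real" where
  "trunc_at c x = (if x \<le> c then x else 0)"

lemma trunc_at_borel[measurable]: "trunc_at c \<in> borel_measurable borel"
  unfolding trunc_at_def by measurable

lemma trunc_at_bounds: "x \<ge> 0 \<Longrightarrow> c \<ge> 0 \<Longrightarrow> 0 \<le> trunc_at c x \<and> trunc_at c x \<le> c \<and> trunc_at c x \<le> x"
  by (auto simp: trunc_at_def)

lemma sum_levels_below_le:
  fixes x :: real
  assumes "x \<ge> 0"
  shows "(\<Sum>k<n. if real (Suc k) < x then 1 else 0) \<le> min (real n) x"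
proof (induction n)
  case 0
  then show ?case
    using assms by simp
next
  case (Suc n)
  then show ?case
    by (auto simp: min_def split: if_splits)
qed

lemma sum_geometric_tail_le:
  fixes \<beta> x :: real
  assumes \<beta>: "\<beta> > 1" and "x \<ge> 0"
  shows "(\<Sum>n<K. if x \<le> \<beta> ^ n then x / \<beta> ^ n else 0) \<le> min 1 x * \<beta> / (\<beta> - 1)"
  using assms(2)
proof (induction K arbitrary: x)
  case 0
  then show ?case
    using \<beta> by (simp add: min_def)
next
  case (Suc K)
  have shift: "(if x \<le> \<beta> ^ Suc n then x / \<beta> ^ Suc n else 0)
      = (if x / \<beta> \<le> \<beta> ^ n then (x / \<beta>) / \<beta> ^ n else 0)" for n
    using \<beta> by (auto simp: field_simps)
  have "(\<Sum>n<Suc K. if x \<le> \<beta> ^ n then x / \<beta> ^ n else 0)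
      = (if x \<le> 1 then x else 0) + (\<Sum>n<K. if x / \<beta> \<le> \<beta> ^ n then (x / \<beta>) / \<beta> ^ n else 0)"
    unfolding sum.lessThan_Suc_shift shift by simp
  also have "\<dots> \<le> (if x \<le> 1 then x else 0) + min 1 (x / \<beta>) * \<beta> / (\<beta> - 1)"
    using Suc \<beta> by simp
  also have "\<dots> \<le> min 1 x * \<beta> / (\<beta> - 1)"
  proof (cases "x \<le> 1")
    case True
    then have "min 1 (x / \<beta>) = x / \<beta>"
      using \<beta> Suc.prems by (simp add: min_def field_simps)
    then show ?thesis
      using True \<beta> by (simp add: field_simps)
  next
    case False
    have "min 1 (x / \<beta>) * \<beta> / (\<beta> - 1) \<le> 1 * \<beta> / (\<beta> - 1)"
      using \<beta> by (intro divide_right_mono mult_right_mono) auto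
    then show ?thesis
      using False by simp
  qed
  finally show ?case .
qed

lemma truncated_squares_average_le:
  fixes \<beta> x :: real
  assumes \<beta>: "\<beta> > 1" and x: "x \<ge> 0"
  shows "(\<Sum>i<floor_pow \<beta> n. (trunc_at (Suc i) x)\<^sup>2) / (floor_pow \<beta> n)\<^sup>2
    \<le> 2 * x * (if x \<le> \<beta> ^ n then x / \<beta> ^ n else 0)"
proof -
  define k where "k = floor_pow \<beta> n"
  have k1: "real k \<ge> 1" and k_le: "real k \<le> \<beta> ^ n" and k_ge: "real k \<ge> \<beta> ^ n / 2"
    using floor_pow_ge_1 floor_pow_le floor_pow_ge_half \<beta> unfolding k_def by auto
  show ?thesis
  proof (cases "x \<le> real k")
    case True
    have "(\<Sum>i<k. (trunc_at (Suc i) x)\<^sup>2) \<le> (\<Sum>i<k. x\<^sup>2)"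
      using x by (intro sum_mono) (auto simp: trunc_at_def)
    then have "(\<Sum>i<k. (trunc_at (Suc i) x)\<^sup>2) / (real k)\<^sup>2 \<le> real k * x\<^sup>2 / (real k)\<^sup>2"
      by (simp add: divide_right_mono)
    also have "\<dots> = x\<^sup>2 / real k"
      using k1 by (simp add: power2_eq_square)
    also have "\<dots> \<le> x\<^sup>2 / (\<beta> ^ n / 2)"
      using k_ge \<beta> k1 by (intro divide_left_mono) auto
    also have "\<dots> = 2 * x * (x / \<beta> ^ n)"
      by (simp add: power2_eq_square field_simps)
    finally show ?thesis
      using True k_le unfolding k_def by auto
  next
    case False
    then have "(\<Sum>i<k. (trunc_at (Suc i) x)\<^sup>2) = 0"
      by (intro sum.neutral) (auto simp: trunc_at_def)
    then show ?thesis
      using x \<beta> unfolding k_def by simp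
  qed
qed

lemma sum_truncated_squares_le:
  fixes \<beta> x :: real
  assumes \<beta>: "\<beta> > 1" and x: "x \<ge> 0"
  shows "(\<Sum>n<K. (\<Sum>i<floor_pow \<beta> n. (trunc_at (Suc i) x)\<^sup>2) / (floor_pow \<beta> n)\<^sup>2)
        \<le> 2 * \<beta> / (\<beta> - 1) * x"
proof -
  have "(\<Sum>n<K. (\<Sum>i<floor_pow \<beta> n. (trunc_at (Suc i) x)\<^sup>2) / (floor_pow \<beta> n)\<^sup>2)
      \<le> 2 * x * (\<Sum>n<K. if x \<le> \<beta> ^ n then x / \<beta> ^ n else 0)"
    unfolding sum_distrib_left by (intro sum_mono truncated_squares_average_le[OF \<beta> x])
  also have "\<dots> \<le> 2 * x * (min 1 x * \<beta> / (\<beta> - 1))"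
    using sum_geometric_tail_le[OF \<beta> x] x by (intro mult_left_mono) auto
  also have "\<dots> \<le> 2 * x * (\<beta> / (\<beta> - 1))"
    using x \<beta> by (intro mult_left_mono) (auto simp: min_def divide_right_mono)
  finally show ?thesis
    by (simp add: mult_ac)
qed

section \<open>Etemadi's strong law of large numbers\<close>

lemma integral_eq_if_distr_eq:
  fixes X Y :: "'a \<Rightarrow> real" and f :: "real \<Rightarrow> real"
  assumes "distr M borel X = distr M borel Y"
    and "X \<in> borel_measurable M" "Y \<in> borel_measurable M" "f \<in> borel_measurable borel"
  shows "(\<integral>\<omega>. f (X \<omega>) \<partial>M) = (\<integral>\<omega>. f (Y \<omega>) \<partial>M)"
  by (metis assms integral_distr)

lemma integrable_if_distr_eq:
  fixes X Y :: "'a \<Rightarrow> real" and f :: "real \<Rightarrow> real"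
  assumes "distr M borel X = distr M borel Y"
    and "X \<in> borel_measurable M" "Y \<in> borel_measurable M" "f \<in> borel_measurable borel"
    and "integrable M (\<lambda>\<omega>. f (Y \<omega>))"
  shows "integrable M (\<lambda>\<omega>. f (X \<omega>))"
  by (metis assms integrable_distr_eq)

lemma measure_eq_if_distr_eq:
  fixes X Y :: "'a \<Rightarrow> real"
  assumes "distr M borel X = distr M borel Y"
    and "X \<in> borel_measurable M" "Y \<in> borel_measurable M" "A \<in> sets borel"
  shows "measure M {\<omega> \<in> space M. X \<omega> \<in> A} = measure M {\<omega> \<in> space M. Y \<omega> \<in> A}"
proof -
  have "measure M (X -` A \<inter> space M) = measure M (Y -` A \<inter> space M)"
    by (metis assms measure_distr)
  then show ?thesis
    by (simp add: vimage_def Int_def conj_commute)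
qed

lemma distr_comp_eq_if_distr_eq:
  fixes X Y :: "'a \<Rightarrow> real"
  assumes "distr M borel X = distr M borel Y"
    and "X \<in> borel_measurable M" "Y \<in> borel_measurable M" "f \<in> borel_measurable borel"
  shows "distr M borel (\<lambda>\<omega>. f (X \<omega>)) = distr M borel (\<lambda>\<omega>. f (Y \<omega>))"
  using distr_distr[of f borel borel X M] distr_distr[of f borel borel Y M] assms
  by (simp add: comp_def)

lemma (in prob_space) covariance_zero_if_indep:
  fixes X Y :: "'a \<Rightarrow> real"
  assumes "indep_var borel X borel Y" and "integrable M X" and "integrable M Y"
  shows "expectation (\<lambda>\<omega>. (X \<omega> - expectation X) * (Y \<omega> - expectation Y)) = 0"
proof -
  have "indep_var borel ((\<lambda>x. x - expectation X) \<circ> X) borel ((\<lambda>x. x - expectation Y) \<circ> Y)"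
    by (rule indep_var_compose[OF assms(1)]) auto
  then have "expectation (\<lambda>\<omega>. (X \<omega> - expectation X) * (Y \<omega> - expectation Y))
      = expectation (\<lambda>\<omega>. X \<omega> - expectation X) * expectation (\<lambda>\<omega>. Y \<omega> - expectation Y)"
    using assms(2,3) unfolding comp_def by (intro indep_var_lebesgue_integral) auto
  then show ?thesis
    using assms(2) by (simp add: prob_space)
qed

lemma (in prob_space) variance_sum_pairwise_indep:
  fixes Y :: "'i \<Rightarrow> 'a \<Rightarrow> real"
  assumes fin: "finite I"
    and indep: "\<And>i j. i \<in> I \<Longrightarrow> j \<in> I \<Longrightarrow> i \<noteq> j \<Longrightarrow> indep_var borel (Y i) borel (Y j)"
    and meas: "\<And>i. i \<in> I \<Longrightarrow> Y i \<in> borel_measurable M"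
    and bounded: "\<And>i \<omega>. i \<in> I \<Longrightarrow> \<omega> \<in> space M \<Longrightarrow> \<bar>Y i \<omega>\<bar> \<le> B"
  shows "variance (\<lambda>\<omega>. \<Sum>i\<in>I. Y i \<omega>) = (\<Sum>i\<in>I. variance (Y i))"
proof -
  define Z where "Z i \<omega> = Y i \<omega> - expectation (Y i)" for i \<omega>
  have int_Y: "integrable M (Y i)" if "i \<in> I" for i
    using that meas bounded by (intro integrable_const_bound[where B=B]) auto
  have Z_bounded: "\<bar>Z i \<omega>\<bar> \<le> B + \<bar>expectation (Y i)\<bar>" if "i \<in> I" "\<omega> \<in> space M" for i \<omega>
    using bounded[OF that] unfolding Z_def by linarith
  have int_ZZ: "integrable M (\<lambda>\<omega>. Z i \<omega> * Z j \<omega>)" if "i \<in> I" "j \<in> I" for i j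
  proof (rule integrable_const_bound[where B="(B + \<bar>expectation (Y i)\<bar>) * (B + \<bar>expectation (Y j)\<bar>)"])
    show "AE \<omega> in M. norm (Z i \<omega> * Z j \<omega>) \<le> (B + \<bar>expectation (Y i)\<bar>) * (B + \<bar>expectation (Y j)\<bar>)"
      using Z_bounded that by (auto simp: abs_mult intro!: mult_mono order_trans[OF abs_ge_zero])
    show "(\<lambda>\<omega>. Z i \<omega> * Z j \<omega>) \<in> borel_measurable M"
      using meas that unfolding Z_def by measurable
  qed
  have cross: "expectation (\<lambda>\<omega>. Z i \<omega> * Z j \<omega>) = (if i = j then variance (Y i) else 0)"
    if "i \<in> I" "j \<in> I" for i j
  proof (cases "i = j")
    case True
    then show ?thesis
      by (simp add: Z_def power2_eq_square)
  next
    case False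
    then show ?thesis
      using covariance_zero_if_indep[OF indep[OF that False] int_Y int_Y] that by (simp add: Z_def)
  qed
  have "variance (\<lambda>\<omega>. \<Sum>i\<in>I. Y i \<omega>) = expectation (\<lambda>\<omega>. (\<Sum>i\<in>I. Z i \<omega>)\<^sup>2)"
    using int_Y by (simp add: Z_def integral_sum sum_subtractf)
  also have "\<dots> = (\<Sum>i\<in>I. \<Sum>j\<in>I. expectation (\<lambda>\<omega>. Z i \<omega> * Z j \<omega>))"
    using int_ZZ by (simp add: power2_eq_square sum_product integral_sum integrable_sum)
  also have "\<dots> = (\<Sum>i\<in>I. variance (Y i))"
    using fin by (simp add: cross sum.delta cong: sum.cong)
  finally show ?thesis .
qed

lemma (in prob_space) AE_tendsto_zero_if_summable_probs:
  fixes Z :: "nat \<Rightarrow> 'a \<Rightarrow> real"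
  assumes meas: "\<And>n. Z n \<in> borel_measurable M"
    and summable: "\<And>\<epsilon>. \<epsilon> > 0 \<Longrightarrow> summable (\<lambda>n. prob {\<omega> \<in> space M. \<epsilon> \<le> \<bar>Z n \<omega>\<bar>})"
  shows "AE \<omega> in M. (\<lambda>n. Z n \<omega>) \<longlonglongrightarrow> 0"
proof -
  have "AE \<omega> in M. eventually (\<lambda>n. \<bar>Z n \<omega>\<bar> < \<epsilon>) sequentially" if "\<epsilon> > 0" for \<epsilon>
  proof -
    have "AE \<omega> in M. eventually (\<lambda>n. \<omega> \<in> space M - {\<omega> \<in> space M. \<epsilon> \<le> \<bar>Z n \<omega>\<bar>}) sequentially"
      using meas summable[OF that] by (intro borel_cantelli_AE1) (auto simp: emeasure_eq_measure)
    then show ?thesis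
      by (rule eventually_mono) (auto elim: eventually_mono)
  qed
  then have "AE \<omega> in M. \<forall>m. eventually (\<lambda>n. \<bar>Z n \<omega>\<bar> < 1 / Suc m) sequentially"
    unfolding AE_all_countable by simp
  then show ?thesis
  proof (rule AE_mp, intro AE_I2 impI)
    fix \<omega> assume small: "\<forall>m. eventually (\<lambda>n. \<bar>Z n \<omega>\<bar> < 1 / Suc m) sequentially"
    show "(\<lambda>n. Z n \<omega>) \<longlonglongrightarrow> 0"
    proof (rule tendstoI)
      fix r :: real assume "r > 0"
      then obtain m where "1 / Suc m < r"
        using reals_Archimedean by (auto simp: inverse_eq_divide)
      with small[rule_format, of m] show "eventually (\<lambda>n. dist (Z n \<omega>) 0 < r) sequentially"
        by (auto elim: eventually_mono)
    qed
  qed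
qed

locale pairwise_iid = prob_space M for M :: "'a measure" +
  fixes X :: "nat \<Rightarrow> 'a \<Rightarrow> real"
  assumes indep: "\<And>i j. i \<noteq> j \<Longrightarrow> indep_var borel (X i) borel (X j)"
    and measurable_X[measurable]: "\<And>i. X i \<in> borel_measurable M"
    and distr_X: "\<And>i. distr M borel (X i) = distr M borel (X 0)"
    and integrable_X0: "integrable M (X 0)"

lemma (in pairwise_iid) pairwise_iid_comp:
  assumes [measurable]: "f \<in> borel_measurable borel" and "integrable M (\<lambda>\<omega>. f (X 0 \<omega>))"
  shows "pairwise_iid M (\<lambda>i \<omega>. f (X i \<omega>))"
proof unfold_locales
  show "indep_var borel (\<lambda>\<omega>. f (X i \<omega>)) borel (\<lambda>\<omega>. f (X j \<omega>))" if "i \<noteq> j" for i j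
    using indep_var_compose[OF indep[OF that] assms(1) assms(1)] by (simp add: comp_def)
  show "distr M borel (\<lambda>\<omega>. f (X i \<omega>)) = distr M borel (\<lambda>\<omega>. f (X 0 \<omega>))" for i
    by (rule distr_comp_eq_if_distr_eq[OF distr_X]) auto
qed (use assms in auto)

locale nonneg_pairwise_iid = pairwise_iid +
  assumes nonneg: "\<And>i \<omega>. X i \<omega> \<ge> 0"
begin

definition truncated :: "nat \<Rightarrow> 'a \<Rightarrow> real" where
  "truncated i \<omega> = trunc_at (Suc i) (X i \<omega>)"

lemma truncated_measurable[measurable]: "truncated i \<in> borel_measurable M"
  unfolding truncated_def by measurable

lemma truncated_bounds: "0 \<le> truncated i \<omega> \<and> truncated i \<omega> \<le> Suc i"
  unfolding truncated_def using trunc_at_bounds[OF nonneg[of i \<omega>]] by simp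

lemma integrable_truncated: "integrable M (truncated i)"
  using truncated_bounds by (intro integrable_const_bound[where B="Suc i"]) auto

lemma integrable_trunc_at_sq: "c \<ge> 0 \<Longrightarrow> integrable M (\<lambda>\<omega>. (trunc_at c (X i \<omega>))\<^sup>2)"
  using trunc_at_bounds[OF nonneg] by (intro integrable_const_bound[where B="c\<^sup>2"]) (auto intro!: power_mono)

lemma expectation_truncated_tendsto: "(\<lambda>i. expectation (truncated i)) \<longlonglongrightarrow> expectation (X 0)"
proof -
  have "(\<lambda>i. expectation (\<lambda>\<omega>. trunc_at (Suc i) (X 0 \<omega>))) \<longlonglongrightarrow> expectation (X 0)"
  proof (rule integral_dominated_convergence[where w="X 0"])
    show "AE \<omega> in M. norm (trunc_at (Suc i) (X 0 \<omega>)) \<le> X 0 \<omega>" for i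
      using trunc_at_bounds[OF nonneg[of 0]] by auto
    show "AE \<omega> in M. (\<lambda>i. trunc_at (Suc i) (X 0 \<omega>)) \<longlonglongrightarrow> X 0 \<omega>"
    proof (rule AE_I2)
      fix \<omega>
      obtain K :: nat where "X 0 \<omega> \<le> K"
        using real_arch_simple by blast
      then have "eventually (\<lambda>i. X 0 \<omega> = trunc_at (Suc i) (X 0 \<omega>)) sequentially"
        unfolding eventually_sequentially by (intro exI[of _ K]) (auto simp: trunc_at_def)
      then show "(\<lambda>i. trunc_at (Suc i) (X 0 \<omega>)) \<longlonglongrightarrow> X 0 \<omega>"
        by (rule Lim_transform_eventually[OF tendsto_const])
    qed
  qed (use integrable_X0 in auto)
  moreover have "expectation (truncated i) = expectation (\<lambda>\<omega>. trunc_at (Suc i) (X 0 \<omega>))" for i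
    unfolding truncated_def by (rule integral_eq_if_distr_eq[OF distr_X]) auto
  ultimately show ?thesis
    by simp
qed

text \<open>Since \<open>\<Sum>\<^sub>k P(X\<^sub>k > k + 1) \<le> E X\<^sub>0\<close>, Borel--Cantelli shows that truncation
  changes only finitely many terms.\<close>

lemma AE_eventually_truncated_eq: "AE \<omega> in M. eventually (\<lambda>i. truncated i \<omega> = X i \<omega>) sequentially"
proof -
  define A where "A k = {\<omega> \<in> space M. X k \<omega> \<in> {real (Suc k)<..}}" for k
  have [measurable]: "A k \<in> sets M" for k
    unfolding A_def by measurable
  have prob_A: "prob (A k) = expectation (indicator {\<omega> \<in> space M. X 0 \<omega> \<in> {real (Suc k)<..}})" for k
    unfolding A_def by (subst measure_eq_if_distr_eq[OF distr_X]) auto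
  have "(\<Sum>k<n. prob (A k)) \<le> expectation (X 0)" for n
  proof -
    have "(\<Sum>k<n. prob (A k))
        = expectation (\<lambda>\<omega>. \<Sum>k<n. indicator {\<omega> \<in> space M. X 0 \<omega> \<in> {real (Suc k)<..}} \<omega>)"
      unfolding prob_A
      by (simp add: integral_sum integrable_real_indicator emeasure_eq_measure)
    also have "\<dots> \<le> expectation (X 0)"
    proof (rule integral_mono)
      fix \<omega> assume "\<omega> \<in> space M"
      then have "(\<Sum>k<n. indicator {\<omega> \<in> space M. X 0 \<omega> \<in> {real (Suc k)<..}} \<omega> :: real)
          = (\<Sum>k<n. if real (Suc k) < X 0 \<omega> then 1 else 0)"
        by (intro sum.cong) (auto simp: indicator_def)
      also have "\<dots> \<le> X 0 \<omega>"
        using sum_levels_below_le[OF nonneg] by (meson min.boundedE)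
      finally show "(\<Sum>k<n. indicator {\<omega> \<in> space M. X 0 \<omega> \<in> {real (Suc k)<..}} \<omega>) \<le> X 0 \<omega>" .
    qed (auto simp: integrable_X0 integrable_real_indicator emeasure_eq_measure)
    finally show ?thesis .
  qed
  then have "summable (\<lambda>k. measure M (A k))"
    by (intro summableI_nonneg_bounded) auto
  then have "AE \<omega> in M. eventually (\<lambda>k. \<omega> \<in> space M - A k) sequentially"
    by (intro borel_cantelli_AE1) (auto simp: emeasure_eq_measure)
  then show ?thesis
    by (rule eventually_mono) (auto simp: A_def truncated_def trunc_at_def elim: eventually_mono)
qed

lemma indep_var_truncated: "i \<noteq> j \<Longrightarrow> indep_var borel (truncated i) borel (truncated j)"
  using indep_var_compose[OF indep, of i j "trunc_at (Suc i)" borel "trunc_at (Suc j)" borel]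
  by (simp add: truncated_def[abs_def] comp_def)

lemma variance_truncated_sum_le:
  "variance (\<lambda>\<omega>. \<Sum>i<k. truncated i \<omega>) \<le> expectation (\<lambda>\<omega>. \<Sum>i<k. (trunc_at (Suc i) (X 0 \<omega>))\<^sup>2)"
proof -
  have "variance (\<lambda>\<omega>. \<Sum>i<k. truncated i \<omega>) = (\<Sum>i<k. variance (truncated i))"
  proof (rule variance_sum_pairwise_indep[where B="real k"])
    show "\<bar>truncated i \<omega>\<bar> \<le> real k" if "i \<in> {..<k}" for i \<omega>
      using truncated_bounds[of i \<omega>] that by simp
  qed (auto simp: indep_var_truncated)
  also have "\<dots> \<le> (\<Sum>i<k. expectation (\<lambda>\<omega>. (truncated i \<omega>)\<^sup>2))"
  proof (intro sum_mono)
    fix i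
    have "integrable M (\<lambda>\<omega>. (truncated i \<omega>)\<^sup>2)"
      unfolding truncated_def by (rule integrable_trunc_at_sq) simp
    then show "variance (truncated i) \<le> expectation (\<lambda>\<omega>. (truncated i \<omega>)\<^sup>2)"
      by (simp add: variance_eq integrable_truncated)
  qed
  also have "\<dots> = (\<Sum>i<k. expectation (\<lambda>\<omega>. (trunc_at (Suc i) (X 0 \<omega>))\<^sup>2))"
    unfolding truncated_def by (intro sum.cong refl integral_eq_if_distr_eq[OF distr_X]) auto
  also have "\<dots> = expectation (\<lambda>\<omega>. \<Sum>i<k. (trunc_at (Suc i) (X 0 \<omega>))\<^sup>2)"
    by (simp add: integral_sum integrable_trunc_at_sq)
  finally show ?thesis .
qed

lemma prob_truncated_deviation_le:
  assumes k: "k > 0" and \<epsilon>: "\<epsilon> > 0"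
  shows "prob {\<omega> \<in> space M. \<epsilon> \<le> \<bar>(\<Sum>i<k. truncated i \<omega> - expectation (truncated i)) / k\<bar>}
    \<le> expectation (\<lambda>\<omega>. \<Sum>i<k. (trunc_at (Suc i) (X 0 \<omega>))\<^sup>2) / (\<epsilon> * k)\<^sup>2"
proof -
  define S where "S \<omega> = (\<Sum>i<k. truncated i \<omega>)" for \<omega>
  have [measurable]: "S \<in> borel_measurable M"
    unfolding S_def by measurable
  have le_k: "truncated i \<omega> \<le> real k" if "i < k" for i \<omega>
  proof -
    have "real (Suc i) \<le> real k"
      using that by simp
    then show ?thesis
      using truncated_bounds[of i \<omega>] by linarith
  qed
  have "0 \<le> S \<omega> \<and> S \<omega> \<le> real k * real k" for \<omega>
    using sum_mono[of "{..<k}" "\<lambda>i. truncated i \<omega>" "\<lambda>_. real k"] le_k truncated_bounds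
    unfolding S_def by (auto intro: sum_nonneg)
  then have "integrable M (\<lambda>\<omega>. (S \<omega>)\<^sup>2)"
    by (intro integrable_const_bound[where B="(real k * real k)\<^sup>2"]) (auto intro!: power_mono)
  have "expectation S = (\<Sum>i<k. expectation (truncated i))"
    unfolding S_def[abs_def] by (simp add: integral_sum integrable_truncated)
  then have "prob {\<omega> \<in> space M. \<epsilon> \<le> \<bar>(\<Sum>i<k. truncated i \<omega> - expectation (truncated i)) / k\<bar>}
      = prob {\<omega> \<in> space M. \<epsilon> * k \<le> \<bar>S \<omega> - expectation S\<bar>}"
    using k by (simp add: S_def sum_subtractf abs_div field_simps)
  also have "\<dots> \<le> variance S / (\<epsilon> * k)\<^sup>2"
    by (rule Chebyshev_inequality) (use \<open>integrable M (\<lambda>\<omega>. (S \<omega>)\<^sup>2)\<close> \<epsilon> k in auto)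
  also have "\<dots> \<le> expectation (\<lambda>\<omega>. \<Sum>i<k. (trunc_at (Suc i) (X 0 \<omega>))\<^sup>2) / (\<epsilon> * k)\<^sup>2"
    using variance_truncated_sum_le[of k] unfolding S_def[abs_def] by (simp add: divide_right_mono)
  finally show ?thesis .
qed

lemma summable_truncated_deviation_probs:
  assumes \<beta>: "\<beta> > 1" and \<epsilon>: "\<epsilon> > 0"
  shows "summable (\<lambda>n. prob {\<omega> \<in> space M.
    \<epsilon> \<le> \<bar>(\<Sum>i<floor_pow \<beta> n. truncated i \<omega> - expectation (truncated i)) / floor_pow \<beta> n\<bar>})"
proof (rule summable_comparison_test'[where N=0])
  let ?k = "floor_pow \<beta>"
  define b where "b n = expectation (\<lambda>\<omega>. \<Sum>i<?k n. (trunc_at (Suc i) (X 0 \<omega>))\<^sup>2) / (\<epsilon> * ?k n)\<^sup>2" for n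
  have k_pos: "?k n > 0" for n
    using floor_pow_ge_1[of \<beta> n] \<beta> by simp
  show "norm (prob {\<omega> \<in> space M.
      \<epsilon> \<le> \<bar>(\<Sum>i<?k n. truncated i \<omega> - expectation (truncated i)) / ?k n\<bar>}) \<le> b n" for n
    using prob_truncated_deviation_le[OF k_pos \<epsilon>] by (simp add: b_def)
  show "summable b"
  proof (rule summableI_nonneg_bounded)
    show "b n \<ge> 0" for n
      unfolding b_def by (intro divide_nonneg_nonneg integral_nonneg_AE) (auto intro!: AE_I2 sum_nonneg)
    fix K
    have "(\<Sum>n<K. b n)
        = expectation (\<lambda>\<omega>. \<Sum>n<K. (\<Sum>i<?k n. (trunc_at (Suc i) (X 0 \<omega>))\<^sup>2) / (?k n)\<^sup>2) / \<epsilon>\<^sup>2"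
      by (simp add: b_def integral_sum integrable_trunc_at_sq sum_divide_distrib power_mult_distrib
          divide_divide_eq_left mult.commute)
    also have "\<dots> \<le> expectation (\<lambda>\<omega>. 2 * \<beta> / (\<beta> - 1) * X 0 \<omega>) / \<epsilon>\<^sup>2"
      by (intro divide_right_mono integral_mono sum_truncated_squares_le[OF \<beta> nonneg])
        (auto simp: integrable_trunc_at_sq integrable_X0)
    finally show "(\<Sum>n<K. b n) \<le> expectation (\<lambda>\<omega>. 2 * \<beta> / (\<beta> - 1) * X 0 \<omega>) / \<epsilon>\<^sup>2" .
  qed
qed

lemma AE_subseq_average_tendsto:
  assumes \<beta>: "\<beta> > 1"
  shows "AE \<omega> in M. (\<lambda>n. (\<Sum>i<floor_pow \<beta> n. X i \<omega>) / floor_pow \<beta> n) \<longlonglongrightarrow> expectation (X 0)"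
proof -
  let ?k = "floor_pow \<beta>"
  have k_lim: "filterlim ?k at_top sequentially"
    using filterlim_floor_pow[OF \<beta>] .
  have "AE \<omega> in M. (\<lambda>n. (\<Sum>i<?k n. truncated i \<omega> - expectation (truncated i)) / ?k n) \<longlonglongrightarrow> 0"
    by (rule AE_tendsto_zero_if_summable_probs[OF _ summable_truncated_deviation_probs[OF \<beta>]]) auto
  then show ?thesis
    using AE_eventually_truncated_eq
  proof eventually_elim
    case (elim \<omega>)
    have "(\<lambda>n. (\<Sum>i<?k n. expectation (truncated i)) / ?k n) \<longlonglongrightarrow> expectation (X 0)"
      using filterlim_compose[OF cesaro_tendsto[OF expectation_truncated_tendsto] k_lim] .
    from tendsto_add[OF elim(1) this]
    have "(\<lambda>n. (\<Sum>i<?k n. truncated i \<omega>) / ?k n) \<longlonglongrightarrow> expectation (X 0)"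
      by (simp add: sum_subtractf diff_divide_distrib)
    moreover have "(\<lambda>n. (\<Sum>i<?k n. X i \<omega>) / ?k n - (\<Sum>i<?k n. truncated i \<omega>) / ?k n) \<longlonglongrightarrow> 0"
      using filterlim_compose[OF average_diff_tendsto_zero k_lim] elim(2)
      by (simp add: eq_commute)
    ultimately show ?case
      using tendsto_add by force
  qed
qed

text \<open>Along every geometric subsequence \<open>\<lfloor>\<beta>\<^sup>n\<rfloor>\<close> the averages converge, and monotonicity of
  the partial sums fills the gaps up to a factor \<open>\<beta>\<^sup>2\<close>, which can be taken arbitrarily close
  to \<open>1\<close>.\<close>

theorem slln_nonneg: "AE \<omega> in M. (\<lambda>n. (\<Sum>i<n. X i \<omega>) / n) \<longlonglongrightarrow> expectation (X 0)"
proof -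
  define \<beta> where "\<beta> j = 1 + 1 / real (Suc j)" for j
  have \<beta>_gt: "\<beta> j > 1" for j
    by (simp add: \<beta>_def)
  have "\<beta> \<longlonglongrightarrow> 1 + 0"
    unfolding \<beta>_def by (intro tendsto_add tendsto_const LIMSEQ_Suc[OF lim_const_over_n])
  then have \<beta>_lim: "\<beta> \<longlonglongrightarrow> 1"
    by simp
  have "AE \<omega> in M. \<forall>j. (\<lambda>n. (\<Sum>i<floor_pow (\<beta> j) n. X i \<omega>) / floor_pow (\<beta> j) n) \<longlonglongrightarrow> expectation (X 0)"
    unfolding AE_all_countable using AE_subseq_average_tendsto[OF \<beta>_gt] by blast
  then show ?thesis
  proof (rule eventually_mono)
    fix \<omega>
    assume lim: "\<forall>j. (\<lambda>n. (\<Sum>i<floor_pow (\<beta> j) n. X i \<omega>) / floor_pow (\<beta> j) n) \<longlonglongrightarrow> expectation (X 0)"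
    have "mono (\<lambda>m. \<Sum>i<m. X i \<omega>)"
      by (intro monoI sum_mono2) (auto simp: nonneg)
    show "(\<lambda>n. (\<Sum>i<n. X i \<omega>) / n) \<longlonglongrightarrow> expectation (X 0)"
    proof (rule tendsto_of_bounds_with_factors[OF \<beta>_lim])
      fix j and \<epsilon> :: real
      assume "\<epsilon> > 0"
      with \<open>mono (\<lambda>m. \<Sum>i<m. X i \<omega>)\<close> show "eventually (\<lambda>m. (expectation (X 0) - \<epsilon>) / (\<beta> j)\<^sup>2
          \<le> (\<Sum>i<m. X i \<omega>) / m \<and> (\<Sum>i<m. X i \<omega>) / m \<le> (expectation (X 0) + \<epsilon>) * (\<beta> j)\<^sup>2) sequentially"
        by (intro average_bounds_from_floor_pow[OF _ _ \<beta>_gt _ lim[rule_format]]) (auto intro: sum_nonneg nonneg)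
    qed
  qed
qed

end

theorem (in pairwise_iid) slln: "AE \<omega> in M. (\<lambda>n. (\<Sum>i<n. X i \<omega>) / n) \<longlonglongrightarrow> expectation (X 0)"
proof -
  interpret pos: pairwise_iid M "\<lambda>i \<omega>. max 0 (X i \<omega>)"
    by (rule pairwise_iid_comp) (auto intro: integrable_X0)
  interpret neg: pairwise_iid M "\<lambda>i \<omega>. max 0 (- X i \<omega>)"
    by (rule pairwise_iid_comp) (auto intro!: integrable_X0 Bochner_Integration.integrable_max)
  interpret pos: nonneg_pairwise_iid M "\<lambda>i \<omega>. max 0 (X i \<omega>)"
    by unfold_locales simp
  interpret neg: nonneg_pairwise_iid M "\<lambda>i \<omega>. max 0 (- X i \<omega>)"
    by unfold_locales simp
  have "expectation (\<lambda>\<omega>. max 0 (X 0 \<omega>)) - expectation (\<lambda>\<omega>. max 0 (- X 0 \<omega>))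
      = expectation (\<lambda>\<omega>. max 0 (X 0 \<omega>) - max 0 (- X 0 \<omega>))"
    by (rule Bochner_Integration.integral_diff[symmetric, OF pos.integrable_X0 neg.integrable_X0])
  also have "\<dots> = expectation (X 0)"
    by (rule Bochner_Integration.integral_cong) auto
  finally have parts: "expectation (\<lambda>\<omega>. max 0 (X 0 \<omega>)) - expectation (\<lambda>\<omega>. max 0 (- X 0 \<omega>))
      = expectation (X 0)" .
  from pos.slln_nonneg neg.slln_nonneg show ?thesis
  proof eventually_elim
    case (elim \<omega>)
    have pos_neg: "max 0 x - max 0 (- x) = x" for x :: real
      by simp
    have "(\<Sum>i<n. max 0 (X i \<omega>)) / n - (\<Sum>i<n. max 0 (- X i \<omega>)) / n = (\<Sum>i<n. X i \<omega>) / n" for n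
      by (simp add: sum_subtractf[symmetric] diff_divide_distrib[symmetric] pos_neg)
    then show ?case
      using tendsto_diff[OF elim] parts by simp
  qed
qed

section \<open>Averages over residue classes\<close>

definition residue_count :: "nat \<Rightarrow> nat \<Rightarrow> nat \<Rightarrow> nat" where
  "residue_count P r T = (T + (P - 1 - r)) div P"

lemma less_residue_count_iff:
  assumes "P > 0" "r < P"
  shows "q < residue_count P r T \<longleftrightarrow> P * q + r < T"
proof -
  have "q < residue_count P r T \<longleftrightarrow> Suc q * P \<le> T + (P - 1 - r)"
    unfolding residue_count_def Suc_le_eq[symmetric] using assms(1) by (rule less_eq_div_iff_mult_less_eq)
  also have "\<dots> \<longleftrightarrow> P * q + r < T"
    using assms by (simp add: algebra_simps) linarith
  finally show ?thesis .
qed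

lemma sum_lessThan_by_residue:
  fixes g :: "nat \<Rightarrow> real"
  assumes P: "P > 0"
  shows "(\<Sum>t<T. g t) = (\<Sum>r<P. \<Sum>q<residue_count P r T. g (P * q + r))"
proof -
  define I where "I = Sigma {..<P} (\<lambda>r. {..<residue_count P r T})"
  have "bij_betw (\<lambda>(r, q). P * q + r) I {..<T}"
    by (rule bij_betwI[where g="\<lambda>t. (t mod P, t div P)"])
      (use less_residue_count_iff[OF P] P in \<open>auto simp: I_def\<close>)
  then have "(\<Sum>t<T. g t) = (\<Sum>(r, q)\<in>I. g (P * q + r))"
    by (subst sum.reindex_bij_betw[symmetric]) (auto simp: case_prod_unfold)
  also have "\<dots> = (\<Sum>r<P. \<Sum>q<residue_count P r T. g (P * q + r))"
    unfolding I_def by (rule sum.Sigma[symmetric]) auto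
  finally show ?thesis .
qed

lemma residue_count_bounds:
  assumes P: "P > 0" and r: "r < P"
  shows "T \<le> P * residue_count P r T + P" and "P * residue_count P r T \<le> T + P"
proof -
  show "T \<le> P * residue_count P r T + P"
    using less_residue_count_iff[OF P r, of "residue_count P r T" T] r by simp
  show "P * residue_count P r T \<le> T + P"
  proof (cases "residue_count P r T")
    case (Suc q)
    then have "P * q + r < T"
      using less_residue_count_iff[OF P r, of q T] by simp
    with Suc show ?thesis
      by simp
  qed simp
qed

lemma residue_count_tendsto:
  assumes P: "P > 0" and r: "r < P"
  shows "(\<lambda>T. residue_count P r T / T) \<longlonglongrightarrow> 1 / P"
proof -
  have "\<bar>residue_count P r T / T - 1 / P\<bar> \<le> 1 / T" if "T > 0" for T
  proof -
    have "residue_count P r T / T - 1 / P = (real P * residue_count P r T - T) / (P * T)"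
      using that P by (simp add: field_simps)
    then have "\<bar>residue_count P r T / T - 1 / P\<bar> = \<bar>real P * residue_count P r T - T\<bar> / (P * T)"
      by (simp add: abs_div)
    also have "\<dots> \<le> P / (P * T)"
    proof (intro divide_right_mono)
      have "real T \<le> real P * residue_count P r T + P" and "real P * residue_count P r T \<le> real T + P"
        using residue_count_bounds[OF P r, of T] by (simp_all flip: of_nat_mult of_nat_add)
      then show "\<bar>real P * residue_count P r T - T\<bar> \<le> P"
        by linarith
    qed simp
    also have "\<dots> = 1 / T"
      using P by simp
    finally show ?thesis .
  qed
  then have "(\<lambda>T. residue_count P r T / T - 1 / P) \<longlonglongrightarrow> 0"
    by (intro Lim_null_comparison[OF _ lim_1_over_n]) (auto simp: eventually_sequentially intro!: exI[of _ 1])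
  then show ?thesis
    by (simp add: LIM_zero_iff)
qed

lemma filterlim_residue_count:
  assumes P: "P > 0"
  shows "filterlim (residue_count P r) at_top sequentially"
  unfolding filterlim_at_top eventually_sequentially
proof (intro allI exI[of _ "_ * P"] impI)
  fix Z T :: nat
  assume "Z * P \<le> T"
  then show "Z \<le> residue_count P r T"
    using P by (simp add: residue_count_def less_eq_div_iff_mult_less_eq)
qed

lemma average_by_residue_tendsto:
  fixes g :: "nat \<Rightarrow> real"
  assumes P: "P > 0"
    and lim: "\<And>r. r < P \<Longrightarrow> (\<lambda>n. (\<Sum>q<n. g (P * q + r)) / n) \<longlonglongrightarrow> L r"
  shows "(\<lambda>T. (\<Sum>t<T. g t) / T) \<longlonglongrightarrow> (\<Sum>r<P. L r) / P"
proof -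
  let ?avg = "\<lambda>r n. (\<Sum>q<n. g (P * q + r)) / n"
  have "(\<Sum>t<T. g t) / T = (\<Sum>r<P. ?avg r (residue_count P r T) * (residue_count P r T / T))" for T
  proof -
    have "(\<Sum>t<T. g t) / T = (\<Sum>r<P. (\<Sum>q<residue_count P r T. g (P * q + r)) / T)"
      unfolding sum_lessThan_by_residue[OF P, of g T] by (rule sum_divide_distrib)
    also have "\<dots> = (\<Sum>r<P. ?avg r (residue_count P r T) * (residue_count P r T / T))"
      by (intro sum.cong refl) (auto simp: field_simps)
    finally show ?thesis .
  qed
  moreover have "(\<lambda>T. \<Sum>r<P. ?avg r (residue_count P r T) * (residue_count P r T / T))
      \<longlonglongrightarrow> (\<Sum>r<P. L r * (1 / P))"
    by (intro tendsto_sum tendsto_mult filterlim_compose[OF lim filterlim_residue_count[OF P]]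
        residue_count_tendsto[OF P]) auto
  ultimately show ?thesis
    by (simp add: sum_divide_distrib)
qed

lemma (in prob_space) periodic_average_tendsto:
  fixes X :: "nat \<Rightarrow> 'a \<Rightarrow> real" and \<phi> :: "nat \<Rightarrow> real"
  assumes P: "P > 0"
    and indep: "\<And>t t'. t \<noteq> t' \<Longrightarrow> t mod P = t' mod P \<Longrightarrow> indep_var borel (X t) borel (X t')"
    and meas: "\<And>t. X t \<in> borel_measurable M"
    and distr: "\<And>t. distr M borel (X t) = distr M borel (X 0)"
    and int: "integrable M (X 0)"
  shows "AE \<omega> in M. (\<lambda>T. (\<Sum>t<T. \<phi> (t mod P) * X t \<omega>) / T) \<longlonglongrightarrow> (\<Sum>r<P. \<phi> r) / P * expectation (X 0)"
proof -
  have "AE \<omega> in M. (\<lambda>n. (\<Sum>q<n. X (P * q + r) \<omega>) / n) \<longlonglongrightarrow> expectation (X 0)" if "r < P" for r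
  proof -
    interpret residue_class: pairwise_iid M "\<lambda>q. X (P * q + r)"
    proof unfold_locales
      show "indep_var borel (X (P * i + r)) borel (X (P * j + r))" if "i \<noteq> j" for i j
        using that P by (intro indep) auto
      show "distr M borel (X (P * i + r)) = distr M borel (X (P * 0 + r))" for i
        using distr[of "P * i + r"] distr[of r] by simp
      show "integrable M (X (P * 0 + r))"
        using integrable_if_distr_eq[OF distr meas meas, of id] int by simp
    qed (rule meas)
    have "expectation (X (P * 0 + r)) = expectation (X 0)"
      using integral_eq_if_distr_eq[OF distr meas meas, of id] by simp
    then show ?thesis
      using residue_class.slln by simp
  qed
  then have "AE \<omega> in M. \<forall>r\<in>{..<P}. (\<lambda>n. (\<Sum>q<n. X (P * q + r) \<omega>) / n) \<longlonglongrightarrow> expectation (X 0)"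
    by (subst AE_ball_countable) auto
  then show ?thesis
  proof eventually_elim
    case (elim \<omega>)
    have "(\<lambda>n. (\<Sum>q<n. \<phi> ((P * q + r) mod P) * X (P * q + r) \<omega>) / n) \<longlonglongrightarrow> \<phi> r * expectation (X 0)"
      if "r < P" for r
      using tendsto_mult[OF tendsto_const[of "\<phi> r"] elim[rule_format, of r]] that
      by (simp add: sum_distrib_left)
    from average_by_residue_tendsto[OF P this] show ?case
      by (simp add: sum_distrib_right)
  qed
qed

lemma (in prob_space) indep_var_pair_functions:
  fixes Z :: "'i \<Rightarrow> 'a \<Rightarrow> real"
  assumes indep: "indep_vars (\<lambda>_. borel) Z UNIV"
    and disjoint: "{a1, b1} \<inter> {a2, b2} = {}"
    and G1: "case_prod G1 \<in> borel_measurable (borel \<Otimes>\<^sub>M borel)"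
    and G2: "case_prod G2 \<in> borel_measurable (borel \<Otimes>\<^sub>M borel)"
  shows "indep_var borel (\<lambda>\<omega>. G1 (Z a1 \<omega>) (Z b1 \<omega>)) borel (\<lambda>\<omega>. G2 (Z a2 \<omega>) (Z b2 \<omega>))"
proof -
  have pair_meas: "(\<lambda>f. G (f a) (f b)) \<in> borel_measurable (PiM {a, b} (\<lambda>_. borel))"
    if "case_prod G \<in> borel_measurable (borel \<Otimes>\<^sub>M borel)" for G and a b :: 'i
  proof -
    have "(\<lambda>f. (f a, f b)) \<in> measurable (PiM {a, b} (\<lambda>_. borel)) (borel \<Otimes>\<^sub>M borel)"
      by (intro measurable_Pair measurable_component_singleton) auto
    from measurable_comp[OF this that] show ?thesis
      by (simp add: comp_def)
  qed
  show ?thesis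
    using indep_var_compose[OF indep_var_restrict[OF indep disjoint] pair_meas[OF G1] pair_meas[OF G2]]
    by (simp add: comp_def)
qed

lemma (in prob_space) distr_pair_function_eq:
  fixes Z :: "'i \<Rightarrow> 'a \<Rightarrow> real"
  assumes indep: "indep_vars (\<lambda>_. borel) Z UNIV"
    and "a1 \<noteq> b1" "a2 \<noteq> b2"
    and "distr M borel (Z a1) = distr M borel (Z a2)"
    and "distr M borel (Z b1) = distr M borel (Z b2)"
    and G: "case_prod G \<in> borel_measurable (borel \<Otimes>\<^sub>M borel)"
  shows "distr M borel (\<lambda>\<omega>. G (Z a1 \<omega>) (Z b1 \<omega>)) = distr M borel (\<lambda>\<omega>. G (Z a2 \<omega>) (Z b2 \<omega>))"
proof -
  have Z_meas: "Z i \<in> borel_measurable M" for i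
    using indep unfolding indep_vars_def by auto
  have joint: "distr M (borel \<Otimes>\<^sub>M borel) (\<lambda>\<omega>. (Z a \<omega>, Z b \<omega>)) = distr M borel (Z a) \<Otimes>\<^sub>M distr M borel (Z b)"
    if "a \<noteq> b" for a b
  proof -
    have "case_prod (\<lambda>x (y::real). x :: real) \<in> borel_measurable (borel \<Otimes>\<^sub>M borel)"
      by simp
    from indep_var_pair_functions[OF indep _ this this, of a a b b] that show ?thesis
      by (simp add: indep_var_distribution_eq)
  qed
  have "distr M borel (\<lambda>\<omega>. G (Z a \<omega>) (Z b \<omega>))
      = distr (distr M (borel \<Otimes>\<^sub>M borel) (\<lambda>\<omega>. (Z a \<omega>, Z b \<omega>))) borel (case_prod G)" for a b
    using Z_meas by (subst distr_distr[OF G]) (auto simp: comp_def)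
  then show ?thesis
    using joint assms by simp
qed

section \<open>Enumerating infinite sets of times\<close>

lemma filterlim_enumerate:
  fixes S :: "nat set"
  assumes "infinite S"
  shows "filterlim (enumerate S) at_top sequentially"
  unfolding filterlim_at_top eventually_sequentially
  using le_enumerate[OF assms] order_trans by blast

lemma Int_lessThan_enumerate:
  fixes S :: "nat set"
  assumes S: "infinite S"
  shows "S \<inter> {..<enumerate S i} = enumerate S ` {..<i}"
proof
  show "S \<inter> {..<enumerate S i} \<subseteq> enumerate S ` {..<i}"
  proof
    fix t assume t: "t \<in> S \<inter> {..<enumerate S i}"
    then obtain j where "enumerate S j = t"
      using enumerate_Ex[OF S] by blast
    with t show "t \<in> enumerate S ` {..<i}"
      using S by auto
  qed
  show "enumerate S ` {..<i} \<subseteq> S \<inter> {..<enumerate S i}"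
    using S by (auto intro: enumerate_in_set)
qed

lemma card_Int_lessThan_enumerate:
  fixes S :: "nat set"
  assumes S: "infinite S"
  shows "card (S \<inter> {..<enumerate S i}) = i"
  unfolding Int_lessThan_enumerate[OF S] using inj_enumerate[OF S]
  by (simp add: card_image inj_on_subset)

lemma Int_lessThan_eq_enumerate_image:
  fixes S :: "nat set"
  assumes S: "infinite S"
  shows "S \<inter> {..<T} = enumerate S ` {..<card (S \<inter> {..<T})}"
proof -
  define m where "m = (LEAST j. T \<le> enumerate S j)"
  have "T \<le> enumerate S m"
    unfolding m_def by (rule LeastI[of _ T]) (rule le_enumerate[OF S])
  have less_T: "enumerate S j < T \<longleftrightarrow> j < m" for j
  proof
    assume "j < m"
    then show "enumerate S j < T"
      using not_less_Least[of j "\<lambda>j. T \<le> enumerate S j"] by (simp add: m_def)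
  next
    assume "enumerate S j < T"
    with \<open>T \<le> enumerate S m\<close> have "enumerate S j < enumerate S m"
      by simp
    then show "j < m"
      using S by simp
  qed
  have "t < T \<longleftrightarrow> t < enumerate S m" if t: "t \<in> S" for t
  proof -
    obtain j where "t = enumerate S j"
      using enumerate_Ex[OF S t] by metis
    then show ?thesis
      by (simp add: less_T S)
  qed
  then have "S \<inter> {..<T} = S \<inter> {..<enumerate S m}"
    by auto
  then show ?thesis
    using Int_lessThan_enumerate[OF S] card_Int_lessThan_enumerate[OF S] by simp
qed

lemma sum_enumerate_card_Int_lessThan:
  fixes S :: "nat set"
  assumes S: "infinite S"
  shows "(\<Sum>k<card (S \<inter> {..<T}). f (enumerate S k)) = (\<Sum>t<T. if t \<in> S then f t else 0)"
proof -
  have "(\<Sum>t<T. if t \<in> S then f t else 0) = sum f ({..<T} \<inter> S)"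
    by (rule sum.inter_restrict[symmetric]) simp
  also have "\<dots> = sum f (S \<inter> {..<T})"
    by (simp only: Int_commute)
  also have "\<dots> = (\<Sum>k<card (S \<inter> {..<T}). f (enumerate S k))"
    by (subst Int_lessThan_eq_enumerate_image[OF S])
      (simp add: sum.reindex inj_on_subset[OF inj_enumerate[OF S]])
  finally show ?thesis ..
qed

lemma filterlim_card_Int_lessThan:
  fixes S :: "nat set"
  assumes S: "infinite S"
  shows "filterlim (\<lambda>T. card (S \<inter> {..<T})) at_top sequentially"
  unfolding filterlim_at_top eventually_sequentially
proof (intro allI exI impI)
  fix Z T assume "enumerate S Z \<le> T"
  then have "card (S \<inter> {..<enumerate S Z}) \<le> card (S \<inter> {..<T})"
    by (intro card_mono) auto
  then show "Z \<le> card (S \<inter> {..<T})"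
    by (simp add: card_Int_lessThan_enumerate[OF S])
qed

lemma infinite_if_count_average_pos:
  fixes S :: "nat set"
  assumes count: "(\<lambda>T. card (S \<inter> {..<T}) / T) \<longlonglongrightarrow> \<gamma>" and \<gamma>: "\<gamma> > 0"
  shows "infinite S"
proof
  assume "finite S"
  then have "(\<lambda>T. real (card S) * (1 / real T)) \<longlonglongrightarrow> real (card S) * 0"
    by (intro tendsto_intros lim_1_over_n)
  moreover have "card (S \<inter> {..<T}) / T \<le> card S * (1 / T)" for T
    using \<open>finite S\<close> by (simp add: card_mono divide_right_mono)
  ultimately have "\<gamma> \<le> 0"
    using count by (intro LIMSEQ_le) auto
  with \<gamma> show False
    by simp
qed

lemma average_enumerate_tendsto:
  fixes S :: "nat set" and f :: "nat \<Rightarrow> real"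
  assumes count: "(\<lambda>T. card (S \<inter> {..<T}) / T) \<longlonglongrightarrow> \<gamma>" and \<gamma>: "\<gamma> > 0"
    and sum: "(\<lambda>T. (\<Sum>t<T. if t \<in> S then f t else 0) / T) \<longlonglongrightarrow> \<gamma> * D"
  shows "(\<lambda>i. (\<Sum>k<i. f (enumerate S k)) / i) \<longlonglongrightarrow> D"
proof -
  have S: "infinite S"
    using infinite_if_count_average_pos[OF count \<gamma>] .
  have "(\<lambda>T. ((\<Sum>t<T. if t \<in> S then f t else 0) / T) / (card (S \<inter> {..<T}) / T)) \<longlonglongrightarrow> D"
    using tendsto_divide[OF sum count] \<gamma> by simp
  then have "(\<lambda>T. (\<Sum>t<T. if t \<in> S then f t else 0) / card (S \<inter> {..<T})) \<longlonglongrightarrow> D"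
    by (rule Lim_transform_eventually) (auto simp: eventually_sequentially intro!: exI[of _ 1])
  from filterlim_compose[OF this filterlim_enumerate[OF S]] show ?thesis
    by (simp add: sum_enumerate_card_Int_lessThan[OF S, symmetric] card_Int_lessThan_enumerate[OF S])
qed

section \<open>Sign-error stochastic approximation\<close>

lemma sign_step_dist_le:
  fixes sg :: "real \<Rightarrow> real"
  assumes sg_neg: "\<forall>z<0. sg z = -1" and sg_pos: "\<forall>z>0. sg z = 1"
    and sg_0: "sg 0 \<in> {-1, 0, 1}"
    and x: "\<bar>x - L\<bar> < \<delta>" and a: "0 < a" "a < \<delta>"
  shows "\<bar>h + a * sg (x - h) - L\<bar> \<le> max \<bar>h - L\<bar> (2 * \<delta>)"
proof -
  consider "sg (x - h) = -1" "x \<le> h" | "sg (x - h) = 0" | "sg (x - h) = 1" "h \<le> x"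
    using sg_neg[rule_format, of "x - h"] sg_pos[rule_format, of "x - h"] sg_0
    by (cases "x - h" "0::real" rule: linorder_cases) auto
  then show ?thesis
  proof cases
    case 1
    then have "\<bar>h - a - L\<bar> \<le> \<bar>h - L\<bar> \<or> \<bar>h - a - L\<bar> \<le> 2 * \<delta>"
      using x a by (simp add: abs_le_iff abs_less_iff) linarith
    with 1 show ?thesis
      by auto
  next
    case 3
    then have "\<bar>h + a - L\<bar> \<le> \<bar>h - L\<bar> \<or> \<bar>h + a - L\<bar> \<le> 2 * \<delta>"
      using x a by (simp add: abs_le_iff abs_less_iff) linarith
    with 3 show ?thesis
      by auto
  qed simp
qed

lemma sign_step_toward:
  fixes sg :: "real \<Rightarrow> real"
  assumes sg_neg: "\<forall>z<0. sg z = -1" and sg_pos: "\<forall>z>0. sg z = 1"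
    and closer: "\<bar>x - L\<bar> < \<bar>h - L\<bar>"
  shows "sg (x - h) = - sgn (h - L)"
  using closer sg_neg[rule_format, of "x - h"] sg_pos[rule_format, of "x - h"]
  by (auto simp: sgn_if abs_if split: if_splits)

context
  fixes sg :: "real \<Rightarrow> real" and \<alpha> x :: "nat \<Rightarrow> real" and L \<delta> :: real and K :: nat
  assumes sg_neg: "\<forall>z<0. sg z = -1" and sg_pos: "\<forall>z>0. sg z = 1"
    and good: "\<And>k. k \<ge> K \<Longrightarrow> \<bar>x (Suc k) - L\<bar> < \<delta> \<and> 0 < \<alpha> (Suc k) \<and> \<alpha> (Suc k) < \<delta>"
begin

lemma sa_rec_stays_close:
  assumes sg_0: "sg 0 \<in> {-1, 0, 1}" and start: "\<bar>sa_rec sg \<alpha> x K - L\<bar> \<le> 2 * \<delta>"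
  shows "\<bar>sa_rec sg \<alpha> x (K + m) - L\<bar> \<le> 2 * \<delta>"
proof (induction m)
  case 0
  then show ?case
    using start by simp
next
  case (Suc m)
  have "\<bar>sa_rec sg \<alpha> x (Suc (K + m)) - L\<bar> \<le> max \<bar>sa_rec sg \<alpha> x (K + m) - L\<bar> (2 * \<delta>)"
    using good[of "K + m"] by (simp add: sign_step_dist_le[OF sg_neg sg_pos sg_0])
  with Suc show ?case
    by simp
qed

lemma sa_rec_while_far:
  assumes far: "\<And>k. k \<ge> K \<Longrightarrow> 2 * \<delta> < \<bar>sa_rec sg \<alpha> x k - L\<bar>"
  shows "sgn (sa_rec sg \<alpha> x (K + m) - L) = sgn (sa_rec sg \<alpha> x K - L)
    \<and> sa_rec sg \<alpha> x (K + m) = sa_rec sg \<alpha> x K - sgn (sa_rec sg \<alpha> x K - L) * (\<Sum>i<m. \<alpha> (Suc (K + i)))"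
proof (induction m)
  case 0
  then show ?case
    by simp
next
  case (Suc m)
  let ?h = "sa_rec sg \<alpha> x" and ?k = "K + m"
  define \<sigma> where "\<sigma> = sgn (?h K - L)"
  from Suc.IH have sgn_k: "sgn (?h ?k - L) = \<sigma>"
    and h_k: "?h ?k = ?h K - \<sigma> * (\<Sum>i<m. \<alpha> (Suc (K + i)))"
    by (auto simp: \<sigma>_def)
  have far_k: "2 * \<delta> < \<bar>?h ?k - L\<bar>" and step: "\<bar>x (Suc ?k) - L\<bar> < \<delta> \<and> 0 < \<alpha> (Suc ?k) \<and> \<alpha> (Suc ?k) < \<delta>"
    using far good by auto
  then have "\<bar>x (Suc ?k) - L\<bar> < \<bar>?h ?k - L\<bar>"
    by linarith
  then have "sg (x (Suc ?k) - ?h ?k) = - sgn (?h ?k - L)"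
    by (rule sign_step_toward[OF sg_neg sg_pos])
  then have next_h: "?h (Suc ?k) = ?h ?k - \<sigma> * \<alpha> (Suc ?k)"
    using sgn_k by simp
  have "sgn (?h (Suc ?k) - L) = \<sigma>"
  proof (cases "?h ?k - L > 0")
    case True
    then have "\<sigma> = 1" and "\<bar>?h ?k - L\<bar> = ?h ?k - L"
      using sgn_k by auto
    with far_k step show ?thesis
      unfolding next_h by simp
  next
    case False
    then have "\<sigma> = -1" and "\<bar>?h ?k - L\<bar> = L - ?h ?k"
      using sgn_k far_k step by (auto simp: sgn_if)
    with far_k step show ?thesis
      unfolding next_h by simp
  qed
  with h_k next_h show ?case
    by (simp add: \<sigma>_def algebra_simps del: sa_rec.simps)
qed

text \<open>While the estimate stays farther than \<open>2 \<delta>\<close> from \<open>L\<close>, every step moves it towards \<open>L\<close>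
  by the full step size, so the step sizes would be summable.\<close>

lemma sa_rec_gets_close:
  assumes diverges: "\<not> summable \<alpha>"
  shows "\<exists>k\<ge>K. \<bar>sa_rec sg \<alpha> x k - L\<bar> \<le> 2 * \<delta>"
proof (rule ccontr)
  let ?h = "sa_rec sg \<alpha> x" and ?\<sigma> = "sgn (sa_rec sg \<alpha> x K - L)"
  assume "\<not> ?thesis"
  then have far: "2 * \<delta> < \<bar>?h k - L\<bar>" if "k \<ge> K" for k
    using that by force
  have "\<delta> > 0"
    using good[of K] by auto
  have "(\<Sum>i<m. \<alpha> (Suc (K + i))) \<le> \<bar>?h K - L\<bar>" for m
  proof -
    note invariant = sa_rec_while_far[OF far, of m]
    have "?\<sigma> * (?h (K + m) - L) = \<bar>?h (K + m) - L\<bar>"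
      using conjunct1[OF invariant] by (metis abs_sgn mult.commute)
    then have "0 < ?\<sigma> * (?h (K + m) - L)"
      using far[of "K + m"] \<open>\<delta> > 0\<close> by simp
    also have "?h (K + m) - L = (?h K - L) - ?\<sigma> * (\<Sum>i<m. \<alpha> (Suc (K + i)))"
      using conjunct2[OF invariant] by simp
    also have "?\<sigma> * ((?h K - L) - ?\<sigma> * (\<Sum>i<m. \<alpha> (Suc (K + i))))
        = ?\<sigma> * (?h K - L) - (?\<sigma> * ?\<sigma>) * (\<Sum>i<m. \<alpha> (Suc (K + i)))"
      by (simp only: right_diff_distrib mult.assoc)
    also have "\<dots> = \<bar>?h K - L\<bar> - (\<Sum>i<m. \<alpha> (Suc (K + i)))"
    proof -
      have "?h K \<noteq> L"
        using far[of K] \<open>\<delta> > 0\<close> by auto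
      then show ?thesis
        by (simp add: abs_sgn mult.commute sgn_mult_self_eq)
    qed
    finally show ?thesis
      by simp
  qed
  then have "summable (\<lambda>i. \<alpha> (Suc (K + i)))"
    using good by (intro summableI_nonneg_bounded) (auto intro: less_imp_le)
  with diverges show False
    using summable_iff_shift[of \<alpha> "Suc K"] by (simp add: add.commute)
qed

end

lemma sa_rec_tendsto:
  fixes sg :: "real \<Rightarrow> real" and \<alpha> x :: "nat \<Rightarrow> real"
  assumes x: "x \<longlonglongrightarrow> L" and \<alpha>_pos: "\<And>j. j \<ge> 1 \<Longrightarrow> \<alpha> j > 0"
    and \<alpha>_lim: "\<alpha> \<longlonglongrightarrow> 0" and \<alpha>_div: "\<not> summable \<alpha>"
    and sg_neg: "\<forall>z<0. sg z = -1" and sg_pos: "\<forall>z>0. sg z = 1"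
    and sg_0: "sg 0 \<in> {-1, 0, 1}"
  shows "(\<lambda>k. sa_rec sg \<alpha> x k) \<longlonglongrightarrow> L"
proof (rule tendstoI)
  fix r :: real assume "r > 0"
  define \<delta> where "\<delta> = r / 3"
  have "\<delta> > 0"
    using \<open>r > 0\<close> by (simp add: \<delta>_def)
  have "eventually (\<lambda>k. \<bar>x (Suc k) - L\<bar> < \<delta> \<and> 0 < \<alpha> (Suc k) \<and> \<alpha> (Suc k) < \<delta>) sequentially"
    using tendstoD[OF LIMSEQ_Suc[OF x] \<open>\<delta> > 0\<close>] tendstoD[OF LIMSEQ_Suc[OF \<alpha>_lim] \<open>\<delta> > 0\<close>]
    by eventually_elim (auto simp: dist_real_def \<alpha>_pos)
  then obtain K where good: "\<And>k. k \<ge> K \<Longrightarrow> \<bar>x (Suc k) - L\<bar> < \<delta> \<and> 0 < \<alpha> (Suc k) \<and> \<alpha> (Suc k) < \<delta>"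
    unfolding eventually_sequentially by blast
  obtain k0 where "k0 \<ge> K" and close: "\<bar>sa_rec sg \<alpha> x k0 - L\<bar> \<le> 2 * \<delta>"
    using sa_rec_gets_close[OF sg_neg sg_pos good \<alpha>_div] by blast
  have stays: "\<bar>sa_rec sg \<alpha> x (k0 + m) - L\<bar> \<le> 2 * \<delta>" for m
    using \<open>k0 \<ge> K\<close> good by (intro sa_rec_stays_close[OF sg_neg sg_pos _ sg_0 close]) auto
  have "\<bar>sa_rec sg \<alpha> x k - L\<bar> < r" if k: "k \<ge> k0" for k
  proof -
    obtain m where "k = k0 + m"
      using le_Suc_ex[OF k] by blast
    then show ?thesis
      using stays[of m] \<open>r > 0\<close> by (simp add: \<delta>_def)
  qed
  then show "eventually (\<lambda>k. dist (sa_rec sg \<alpha> x k) L < r) sequentially"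
    unfolding eventually_sequentially dist_real_def by blast
qed

lemma sa_hat_tendsto:
  fixes sg :: "real \<Rightarrow> real" and \<alpha> x :: "nat \<Rightarrow> real"
  assumes "x \<longlonglongrightarrow> L" and "\<And>j. j \<ge> 1 \<Longrightarrow> \<alpha> j > 0"
    and "\<alpha> \<longlonglongrightarrow> 0" and "\<not> summable \<alpha>"
    and "\<forall>z<0. sg z = -1" and "\<forall>z>0. sg z = 1" and "sg 0 \<in> {-1, 0, 1}"
  shows "(\<lambda>j. sa_hat sg \<alpha> x j) \<longlonglongrightarrow> L"
proof -
  have "filterlim (\<lambda>j::nat. j - 1) at_top sequentially"
    unfolding filterlim_at_top eventually_sequentially
  proof
    fix Z :: nat
    show "\<exists>N. \<forall>j\<ge>N. Z \<le> j - 1"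
      by (intro exI[of _ "Suc Z"]) auto
  qed
  with sa_rec_tendsto[OF assms] show ?thesis
    unfolding sa_hat_def by (rule filterlim_compose)
qed

section \<open>Inverting the estimated matrix\<close>

definition diag_offdiag_mat :: "nat \<Rightarrow> real \<Rightarrow> real \<Rightarrow> real mat" where
  "diag_offdiag_mat N a e = mat N N (\<lambda>(p, q). if p = q then a else e)"

text \<open>The matrix \<open>(a - e) I + e 1 1\<^sup>T\<close> is inverted by the Sherman--Morrison formula.\<close>

definition diag_offdiag_solve :: "nat \<Rightarrow> real \<Rightarrow> real \<Rightarrow> (nat \<Rightarrow> real) \<Rightarrow> nat \<Rightarrow> real" where
  "diag_offdiag_solve N a e d p = (d p - e * (\<Sum>q<N. d q) / (a + (real N - 1) * e)) / (a - e)"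

lemma diag_offdiag_mat_mult_vec:
  assumes "v \<in> carrier_vec N" "p < N"
  shows "(diag_offdiag_mat N a e *\<^sub>v v) $ p = (a - e) * v $ p + e * (\<Sum>q<N. v $ q)"
proof -
  have "(diag_offdiag_mat N a e *\<^sub>v v) $ p = (\<Sum>q<N. (if p = q then a else e) * v $ q)"
    using assms by (simp add: diag_offdiag_mat_def scalar_prod_def lessThan_atLeast0)
  also have "\<dots> = (\<Sum>q<N. e * v $ q + (if p = q then (a - e) * v $ q else 0))"
    by (intro sum.cong) (auto simp: algebra_simps)
  also have "\<dots> = (a - e) * v $ p + e * (\<Sum>q<N. v $ q)"
    using assms by (simp add: sum.distrib sum_distrib_left)
  finally show ?thesis .
qed

lemma sum_diag_offdiag_solve:
  assumes "a \<noteq> e" "a + (real N - 1) * e \<noteq> 0"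
  shows "(\<Sum>p<N. diag_offdiag_solve N a e d p) = (\<Sum>q<N. d q) / (a + (real N - 1) * e)"
proof -
  define s where "s = a + (real N - 1) * e"
  have "(\<Sum>p<N. diag_offdiag_solve N a e d p) = ((\<Sum>q<N. d q) - real N * (e * (\<Sum>q<N. d q) / s)) / (a - e)"
    by (simp add: diag_offdiag_solve_def s_def sum_divide_distrib[symmetric] sum_subtractf)
  also have "(\<Sum>q<N. d q) - real N * (e * (\<Sum>q<N. d q) / s) = (\<Sum>q<N. d q) * (a - e) / s"
    using assms unfolding s_def by (simp add: field_simps)
  finally show ?thesis
    using assms by (simp add: s_def)
qed

lemma diag_offdiag_solve_mult:
  assumes "a \<noteq> e" "a + (real N - 1) * e \<noteq> 0" "p < N"
  shows "diag_offdiag_solve N a e (\<lambda>q. (a - e) * x q + e * (\<Sum>q<N. x q)) p = x p"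
proof -
  have "(\<Sum>q<N. (a - e) * x q + e * (\<Sum>q<N. x q)) = (a - e) * (\<Sum>q<N. x q) + real N * (e * (\<Sum>q<N. x q))"
    by (simp add: sum.distrib sum_distrib_left)
  also have "\<dots> = (a + (real N - 1) * e) * (\<Sum>q<N. x q)"
    by (simp add: algebra_simps)
  finally have "(\<Sum>q<N. (a - e) * x q + e * (\<Sum>q<N. x q)) = (a + (real N - 1) * e) * (\<Sum>q<N. x q)" .
  then show ?thesis
    using assms by (simp add: diag_offdiag_solve_def)
qed

lemma diag_offdiag_mat_mult_solve:
  assumes ae: "a \<noteq> e" and s: "a + (real N - 1) * e \<noteq> 0"
  shows "diag_offdiag_mat N a e *\<^sub>v vec N (diag_offdiag_solve N a e d) = vec N d"
proof (rule eq_vecI)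
  fix p assume "p < dim_vec (vec N d)"
  then have p: "p < N"
    by simp
  have "(a - e) * diag_offdiag_solve N a e d p = d p - e * (\<Sum>q<N. d q) / (a + (real N - 1) * e)"
    using ae by (simp add: diag_offdiag_solve_def)
  moreover have "(\<Sum>q<N. vec N (diag_offdiag_solve N a e d) $ q) = (\<Sum>q<N. d q) / (a + (real N - 1) * e)"
    using sum_diag_offdiag_solve[OF ae s] by simp
  ultimately show "(diag_offdiag_mat N a e *\<^sub>v vec N (diag_offdiag_solve N a e d)) $ p = vec N d $ p"
    using p by (simp add: diag_offdiag_mat_mult_vec)
qed (simp add: diag_offdiag_mat_def)

lemma mat_inverse_diag_offdiag_mat:
  assumes ae: "a \<noteq> e" and s: "a + (real N - 1) * e \<noteq> 0"
  shows "\<exists>B. mat_inverse (diag_offdiag_mat N a e) = Some B \<and>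
    B *\<^sub>v vec N d = vec N (diag_offdiag_solve N a e d)"
proof -
  define U where "U = diag_offdiag_mat N a e"
  have U: "U \<in> carrier_mat N N"
    by (simp add: U_def diag_offdiag_mat_def)
  have "v = 0\<^sub>v N" if v: "v \<in> carrier_vec N" "U *\<^sub>v v = 0\<^sub>v N" for v
  proof (rule eq_vecI)
    fix p assume "p < dim_vec (0\<^sub>v N :: real vec)"
    then have "p < N"
      by simp
    then have "v $ p = diag_offdiag_solve N a e (\<lambda>q. (U *\<^sub>v v) $ q) p"
      using diag_offdiag_solve_mult[OF ae s \<open>p < N\<close>, of "\<lambda>q. v $ q"]
        diag_offdiag_mat_mult_vec[OF v(1)] by (simp add: U_def diag_offdiag_solve_def)
    then show "v $ p = 0\<^sub>v N $ p"
      using v(2) \<open>p < N\<close> by (simp add: diag_offdiag_solve_def)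
  qed (use v in simp)
  then have "U \<in> Units (ring_mat TYPE(real) N ())"
    using det_0_iff_vec_prod_zero_field[OF U] by (intro det_non_zero_imp_unit[OF U]) blast
  then obtain B where B: "mat_inverse U = Some B"
    using mat_inverse(1)[OF U, of "()"] by (cases "mat_inverse U") auto
  then have "B * U = 1\<^sub>m N" and "B \<in> carrier_mat N N"
    using mat_inverse(2)[OF U] by auto
  then have "B *\<^sub>v vec N d = vec N (diag_offdiag_solve N a e d)"
    using U by (simp flip: diag_offdiag_mat_mult_solve[OF ae s, of d] U_def add: assoc_mult_mat_vec[symmetric])
  with B show ?thesis
    unfolding U_def by blast
qed

lemma bhat_eq_diag_offdiag_solve:
  assumes "e2hat sg \<alpha> N c u j \<omega> \<noteq> e1hat sg \<alpha> N c u j \<omega>"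
    and "e2hat sg \<alpha> N c u j \<omega> + (real N - 1) * e1hat sg \<alpha> N c u j \<omega> \<noteq> 0"
    and "n \<in> {1..N}"
  shows "bhat sg \<alpha> b N c u w n j \<omega> = diag_offdiag_solve N (e2hat sg \<alpha> N c u j \<omega>) (e1hat sg \<alpha> N c u j \<omega>)
    (\<lambda>p. dhat sg \<alpha> b N c u w (p + 1) j \<omega>) (n - 1)"
proof -
  have "U_mat sg \<alpha> N c u j \<omega> = diag_offdiag_mat N (e2hat sg \<alpha> N c u j \<omega>) (e1hat sg \<alpha> N c u j \<omega>)"
    by (simp add: U_mat_def diag_offdiag_mat_def)
  then show ?thesis
    using mat_inverse_diag_offdiag_mat[OF assms(1,2), of "\<lambda>p. dhat sg \<alpha> b N c u w (p + 1) j \<omega>"] assms(3)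
    by (auto simp: bhat_def Let_def)
qed

lemma bhat_tendsto:
  assumes dhat: "\<And>n. n \<in> {1..N} \<Longrightarrow>
      (\<lambda>j. dhat sg \<alpha> b N c u w n j \<omega>) \<longlonglongrightarrow> (\<mu>c - \<mu>) * b n + \<mu> * (\<Sum>m=1..N. b m)"
    and e1hat: "(\<lambda>j. e1hat sg \<alpha> N c u j \<omega>) \<longlonglongrightarrow> \<mu>"
    and e2hat: "(\<lambda>j. e2hat sg \<alpha> N c u j \<omega>) \<longlonglongrightarrow> \<mu>c"
    and c1: "\<mu>c \<noteq> \<mu>" and c2: "\<mu>c \<noteq> (1 - real N) * \<mu>"
    and n: "n \<in> {1..N}"
  shows "(\<lambda>j. bhat sg \<alpha> b N c u w n j \<omega>) \<longlonglongrightarrow> b n"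
proof -
  let ?solve = "\<lambda>j. diag_offdiag_solve N (e2hat sg \<alpha> N c u j \<omega>) (e1hat sg \<alpha> N c u j \<omega>)
    (\<lambda>p. dhat sg \<alpha> b N c u w (p + 1) j \<omega>) (n - 1)"
  have c2': "\<mu>c + (real N - 1) * \<mu> \<noteq> 0"
    using c2 by (simp add: algebra_simps)
  have "eventually (\<lambda>j. e2hat sg \<alpha> N c u j \<omega> \<noteq> e1hat sg \<alpha> N c u j \<omega>) sequentially"
    using tendsto_imp_eventually_ne[OF tendsto_diff[OF e2hat e1hat], of 0] c1 by simp
  moreover have "eventually (\<lambda>j. e2hat sg \<alpha> N c u j \<omega> + (real N - 1) * e1hat sg \<alpha> N c u j \<omega> \<noteq> 0) sequentially"
    by (rule tendsto_imp_eventually_ne[OF tendsto_add[OF e2hat tendsto_mult[OF tendsto_const e1hat]] c2'])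
  ultimately have eq: "eventually (\<lambda>j. ?solve j = bhat sg \<alpha> b N c u w n j \<omega>) sequentially"
    by eventually_elim (rule bhat_eq_diag_offdiag_solve[OF _ _ n, symmetric])
  have "?solve \<longlonglongrightarrow> diag_offdiag_solve N \<mu>c \<mu>
      (\<lambda>p. (\<mu>c - \<mu>) * b (p + 1) + \<mu> * (\<Sum>q<N. b (q + 1))) (n - 1)"
    unfolding diag_offdiag_solve_def
    using dhat c1 c2' n by (intro tendsto_intros e1hat e2hat) (auto simp: sum.atLeast1_atMost_eq)
  moreover have "diag_offdiag_solve N \<mu>c \<mu> (\<lambda>p. (\<mu>c - \<mu>) * b (p + 1) + \<mu> * (\<Sum>q<N. b (q + 1))) (n - 1) = b n"
  proof -
    have "n - 1 < N" and "n - 1 + 1 = n"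
      using n by auto
    then show ?thesis
      using diag_offdiag_solve_mult[OF c1 c2', of "n - 1" "\<lambda>q. b (q + 1)"] by simp
  qed
  ultimately have "?solve \<longlonglongrightarrow> b n"
    by simp
  from this eq show ?thesis
    by (rule Lim_transform_eventually)
qed

section \<open>The FIR system\<close>

lemma mod_eq_imp_dist_ge:
  fixes t t' P :: nat
  assumes "t \<noteq> t'" "t mod P = t' mod P"
  shows "int P \<le> \<bar>int t - int t'\<bar>"
proof -
  have "P \<le> b - a" if "a < b" "a mod P = b mod P" for a b :: nat
    using that by (metis dvd_imp_le mod_eq_dvd_iff_nat less_imp_le zero_less_diff)
  from this[of t t'] this[of t' t] assms show ?thesis
    by (cases "t < t'") auto
qed

definition shift_index :: "int \<Rightarrow> int + int \<Rightarrow> int + int" where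
  "shift_index s = map_sum ((+) s) ((+) s)"

lemma shift_index_simps[simp]:
  "shift_index s (Inl t) = Inl (s + t)" "shift_index s (Inr t) = Inr (s + t)"
  by (simp_all add: shift_index_def)

lemma shift_index_0[simp]: "shift_index 0 i = i"
  by (cases i) simp_all

lemma shift_index_eq_self_iff[simp]: "shift_index s i = i \<longleftrightarrow> s = 0"
  by (cases i) simp_all

lemma shift_index_eq_shift_index_iff: "shift_index s i = shift_index s' j \<longleftrightarrow> shift_index (s - s') i = j"
  by (cases i; cases j) auto

locale fir_system = prob_space M for M :: "'a measure" +
  fixes u w :: "int \<Rightarrow> 'a \<Rightarrow> real"
  assumes indep: "indep_vars (\<lambda>_. borel) (\<lambda>i. case i of Inl t \<Rightarrow> u t | Inr t \<Rightarrow> w t) UNIV"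
    and u_distr: "\<And>t. distr M borel (u t) = distr M borel (u 0)"
    and w_distr: "\<And>t. distr M borel (w t) = distr M borel (w 0)"
    and integrable_u0: "integrable M (u 0)"
    and integrable_w0: "integrable M (w 0)"
    and w_mean: "expectation (w 0) = 0"
begin

definition uw :: "int + int \<Rightarrow> 'a \<Rightarrow> real" where
  "uw i = (case i of Inl t \<Rightarrow> u t | Inr t \<Rightarrow> w t)"

lemma uw_simps[simp]: "uw (Inl t) = u t" "uw (Inr t) = w t"
  by (simp_all add: uw_def)

lemma indep_uw: "indep_vars (\<lambda>_. borel) uw UNIV"
  using indep by (simp add: uw_def[abs_def])

lemma measurable_uw[measurable]: "uw i \<in> borel_measurable M"
  using indep_uw by (auto simp: indep_vars_def)

lemma measurable_u[measurable]: "u t \<in> borel_measurable M"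
  and measurable_w[measurable]: "w t \<in> borel_measurable M"
  using measurable_uw[of "Inl t"] measurable_uw[of "Inr t"] by simp_all

lemma distr_uw_shift_index: "distr M borel (uw (shift_index s i)) = distr M borel (uw i)"
  by (cases i) (simp, metis u_distr, simp, metis w_distr)

lemma integrable_u: "integrable M (u t)"
  and integrable_w: "integrable M (w t)"
  using integrable_if_distr_eq[OF u_distr, of t id] integrable_if_distr_eq[OF w_distr, of t id]
    integrable_u0 integrable_w0 by simp_all

lemma expectation_u: "expectation (u t) = expectation (u 0)"
  and expectation_w: "expectation (w t) = 0"
  using integral_eq_if_distr_eq[OF u_distr, of t id] integral_eq_if_distr_eq[OF w_distr, of t id] w_mean
  by simp_all


text \<open>If \<open>i\<close> and \<open>j\<close> lie less than \<open>P\<close> time steps apart, summands at times congruent modulo \<open>P\<close>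
  involve disjoint coordinates and are therefore independent.\<close>

lemma pair_average_tendsto:
  fixes G :: "real \<Rightarrow> real \<Rightarrow> real" and \<phi> :: "nat \<Rightarrow> real"
  assumes P: "P > 0" and "i \<noteq> j"
    and near: "\<And>s. shift_index s i = j \<Longrightarrow> \<bar>s\<bar> < int P"
    and G: "case_prod G \<in> borel_measurable (borel \<Otimes>\<^sub>M borel)"
    and integrable: "integrable M (\<lambda>\<omega>. G (uw i \<omega>) (uw j \<omega>))"
  shows "AE \<omega> in M. (\<lambda>T. (\<Sum>t<T. \<phi> (t mod P) * G (uw (shift_index t i) \<omega>) (uw (shift_index t j) \<omega>)) / T)
    \<longlonglongrightarrow> (\<Sum>r<P. \<phi> r) / P * expectation (\<lambda>\<omega>. G (uw i \<omega>) (uw j \<omega>))"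
proof -
  define X where "X t \<omega> = G (uw (shift_index (int t) i) \<omega>) (uw (shift_index (int t) j) \<omega>)" for t \<omega>
  have X_meas: "X t \<in> borel_measurable M" for t
    using measurable_comp[OF measurable_Pair[OF measurable_uw measurable_uw] G]
    by (simp add: X_def[abs_def] comp_def)
  have X_distr: "distr M borel (X t) = distr M borel (X 0)" for t
    unfolding X_def using \<open>i \<noteq> j\<close>
    by (intro distr_pair_function_eq[OF indep_uw _ _ _ _ G])
      (auto simp: distr_uw_shift_index shift_index_eq_shift_index_iff)
  have X_indep: "indep_var borel (X t) borel (X t')" if "t \<noteq> t'" "t mod P = t' mod P" for t t'
  proof -
    have far: "P \<le> \<bar>int t - int t'\<bar>"
      by (rule mod_eq_imp_dist_ge[OF that])
    have "shift_index (int t - int t') i \<noteq> j" and "shift_index (int t' - int t) i \<noteq> j"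
      using near far by force+
    then show ?thesis
      unfolding X_def using that \<open>i \<noteq> j\<close>
      by (intro indep_var_pair_functions[OF indep_uw _ G G])
        (auto simp: shift_index_eq_shift_index_iff)
  qed
  have X_0: "X 0 = (\<lambda>\<omega>. G (uw i \<omega>) (uw j \<omega>))"
    by (simp add: X_def[abs_def])
  show ?thesis
    using periodic_average_tendsto[where X=X and \<phi>=\<phi>, OF P X_indep X_meas X_distr] integrable
    by (simp add: X_0) (simp add: X_def)
qed


lemma borel_measurable_of_bool_less[measurable (raw)]:
  fixes f :: "'b \<Rightarrow> real"
  shows "f \<in> borel_measurable N \<Longrightarrow> (\<lambda>x. of_bool (c < f x) :: real) \<in> borel_measurable N"
  unfolding of_bool_def by measurable

lemma integrable_uw: "integrable M (uw i)"
  by (cases i) (simp_all add: integrable_u integrable_w)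

lemma expectation_exceed: "expectation (\<lambda>\<omega>. of_bool (c < u 0 \<omega>)) = prob {\<omega> \<in> space M. c < u 0 \<omega>}"
proof -
  have "expectation (\<lambda>\<omega>. of_bool (c < u 0 \<omega>)) = expectation (indicator {\<omega> \<in> space M. c < u 0 \<omega>})"
    by (intro Bochner_Integration.integral_cong) (auto simp: indicator_def)
  also have "\<dots> = prob {\<omega> \<in> space M. c < u 0 \<omega>}"
    by (simp add: Int_absorb2)
  finally show ?thesis .
qed

lemma expectation_exceed_mult_uw:
  assumes "i \<noteq> Inl 0"
  shows "expectation (\<lambda>\<omega>. of_bool (c < u 0 \<omega>) * uw i \<omega>)
    = prob {\<omega> \<in> space M. c < u 0 \<omega>} * expectation (uw i)"
proof -
  have meas_exceed: "case_prod (\<lambda>(x::real) (y::real). of_bool (c < x) :: real) \<in> borel_measurable (borel \<Otimes>\<^sub>M borel)"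
    and meas_fst: "case_prod (\<lambda>(x::real) (y::real). x) \<in> borel_measurable (borel \<Otimes>\<^sub>M borel)"
    by measurable
  have "indep_var borel (\<lambda>\<omega>. of_bool (c < u 0 \<omega>) :: real) borel (uw i)"
    using indep_var_pair_functions[OF indep_uw _ meas_exceed meas_fst, of "Inl 0" "Inl 0" i i] assms
    by simp
  then show ?thesis
    by (subst indep_var_lebesgue_integral)
      (auto simp: expectation_exceed integrable_uw intro!: integrable_const_bound[where B=1])
qed


lemma AE_exceed_average:
  assumes P: "P > 0"
  shows "AE \<omega> in M. (\<lambda>T. (\<Sum>t<T. \<phi> (t mod P) * of_bool (c < u (int t) \<omega>)) / T)
    \<longlonglongrightarrow> (\<Sum>r<P. \<phi> r) / P * prob {\<omega> \<in> space M. c < u 0 \<omega>}"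
proof -
  have G: "case_prod (\<lambda>(x::real) (y::real). of_bool (c < x) :: real) \<in> borel_measurable (borel \<Otimes>\<^sub>M borel)"
    by measurable
  have "integrable M (\<lambda>\<omega>. of_bool (c < uw (Inl 0) \<omega>) :: real)"
    by (intro integrable_const_bound[where B=1]) auto
  from pair_average_tendsto[OF P _ _ G this, of "Inr 0" \<phi>] show ?thesis
    by (simp add: expectation_exceed)
qed


lemma AE_exceed_u_average:
  assumes P: "P > 0"
  shows "AE \<omega> in M. (\<lambda>T. (\<Sum>t<T. \<phi> (t mod P) * (of_bool (c < u (int t) \<omega>) * u (int t) \<omega>)) / T)
    \<longlonglongrightarrow> (\<Sum>r<P. \<phi> r) / P * expectation (\<lambda>\<omega>. of_bool (c < u 0 \<omega>) * u 0 \<omega>)"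
proof -
  have G: "case_prod (\<lambda>(x::real) (y::real). of_bool (c < x) * x) \<in> borel_measurable (borel \<Otimes>\<^sub>M borel)"
    by measurable
  have "integrable M (\<lambda>\<omega>. of_bool (c < uw (Inl 0) \<omega>) * uw (Inl 0) \<omega>)"
    by (rule Bochner_Integration.integrable_bound[OF integrable_u0]) auto
  from pair_average_tendsto[OF P _ _ G this, of "Inr 0" \<phi>] show ?thesis
    by simp
qed

lemma AE_exceed_shifted_average:
  assumes P: "P > 0" and "i \<noteq> Inl 0" and "\<And>s. shift_index s (Inl 0) = i \<Longrightarrow> \<bar>s\<bar> < int P"
  shows "AE \<omega> in M. (\<lambda>T. (\<Sum>t<T. \<phi> (t mod P) * (of_bool (c < u (int t) \<omega>) * uw (shift_index t i) \<omega>)) / T)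
    \<longlonglongrightarrow> (\<Sum>r<P. \<phi> r) / P * (prob {\<omega> \<in> space M. c < u 0 \<omega>} * expectation (uw i))"
proof -
  have G: "case_prod (\<lambda>(x::real) (y::real). of_bool (c < x) * y) \<in> borel_measurable (borel \<Otimes>\<^sub>M borel)"
    by measurable
  have "integrable M (\<lambda>\<omega>. of_bool (c < uw (Inl 0) \<omega>) * uw i \<omega>)"
    by (rule Bochner_Integration.integrable_bound[OF integrable_uw]) auto
  from pair_average_tendsto[OF P _ _ G this, of \<phi>] assms show ?thesis
    by (simp add: expectation_exceed_mult_uw)
qed

lemma AE_u_average: "AE \<omega> in M. (\<lambda>T. (\<Sum>t<T. u (int t + 1) \<omega>) / T) \<longlonglongrightarrow> expectation (u 0)"
proof -
  have G: "case_prod (\<lambda>(x::real) (y::real). x) \<in> borel_measurable (borel \<Otimes>\<^sub>M borel)"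
    by measurable
  have "integrable M (\<lambda>\<omega>. uw (Inl 1) \<omega>)"
    using integrable_u[of 1] by simp
  from pair_average_tendsto[OF _ _ _ G this, of 1 "Inr 0" "\<lambda>_. 1"] show ?thesis
    using expectation_u[of 1] by simp
qed

end

definition selected_times :: "nat \<Rightarrow> real \<Rightarrow> (int \<Rightarrow> 'a \<Rightarrow> real) \<Rightarrow> 'a \<Rightarrow> nat set" where
  "selected_times N c u \<omega> = {t. 1 \<le> t \<and> t mod (N + 2) \<in> {1..N} \<and> u (int t) \<omega> > c}"

definition exceed_times :: "real \<Rightarrow> (int \<Rightarrow> 'a \<Rightarrow> real) \<Rightarrow> 'a \<Rightarrow> nat set" where
  "exceed_times c u \<omega> = {t. 1 \<le> t \<and> u (int t) \<omega> > c}"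

lemma d_avg_eq:
  "d_avg b N c u w n i \<omega> = (\<Sum>k<i. fir_out b N u w (int (enumerate (selected_times N c u \<omega>) k + n)) \<omega>) / i"
  unfolding d_avg_def tau_def selected_times_def by (simp add: sum.atLeast1_atMost_eq)

lemma e1_avg_eq: "e1_avg u T \<omega> = (\<Sum>t<T. u (int t + 1) \<omega>) / T"
  unfolding e1_avg_def by (simp add: sum.atLeast1_atMost_eq add.commute)

lemma e2_avg_eq: "e2_avg c u k \<omega> = (\<Sum>k'<k. u (int (enumerate (exceed_times c u \<omega>) k')) \<omega>) / k"
  unfolding e2_avg_def exc_time_def exceed_times_def by (simp add: sum.atLeast1_atMost_eq)

lemma k_count_eq: "k_count N c u \<omega> j = card (exceed_times c u \<omega> \<inter> {..<Suc (s_time N c u \<omega> j)})"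
  unfolding k_count_def exceed_times_def by (rule arg_cong[where f=card]) auto

lemma filterlim_s_time:
  assumes "N \<ge> 1" and "infinite (selected_times N c u \<omega>)"
  shows "filterlim (s_time N c u \<omega>) at_top sequentially"
proof -
  have "filterlim (\<lambda>j. N * j - 1) at_top sequentially"
    unfolding filterlim_at_top eventually_sequentially
  proof
    fix Z :: nat
    have "Z \<le> N * j - 1" if "j \<ge> Suc Z" for j
      using that \<open>N \<ge> 1\<close> mult_le_mono[of 1 N "Suc Z" j] by simp
    then show "\<exists>J. \<forall>j\<ge>J. Z \<le> N * j - 1"
      by blast
  qed
  moreover have "s_time N c u \<omega> = (\<lambda>j. enumerate (selected_times N c u \<omega>) (N * j - 1))"
    by (simp add: fun_eq_iff s_time_def tau_def selected_times_def)
  ultimately show ?thesis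
    using filterlim_compose[OF filterlim_enumerate[OF assms(2)]] by simp
qed

lemma real_card_Int_lessThan:
  fixes S :: "nat set"
  shows "real (card (S \<inter> {..<T})) = (\<Sum>t<T. of_bool (t \<in> S))"
proof -
  have "(\<Sum>t<T. of_bool (t \<in> S) :: real) = (\<Sum>t<T. if t \<in> S then 1 else 0)"
    by (simp add: of_bool_def)
  also have "\<dots> = sum (\<lambda>_. 1) ({..<T} \<inter> S)"
    by (rule sum.inter_restrict[symmetric]) simp
  finally show ?thesis
    by (simp add: Int_commute)
qed

lemma of_bool_selected_times:
  "of_bool (t \<in> selected_times N c u \<omega>) = (of_bool (t mod (N + 2) \<in> {1..N}) * of_bool (c < u (int t) \<omega>) :: real)"
  by (cases t) (auto simp: selected_times_def)

lemma sum_of_bool_residues: "(\<Sum>r<N + 2. of_bool (r \<in> {1..N}) :: real) = real N"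
proof -
  have "{1..N} \<inter> {..<N + 2} = {1..N}"
    by auto
  then show ?thesis
    using real_card_Int_lessThan[of "{1..N}" "N + 2"] by simp
qed

lemma sum_selected_fir_out:
  "(\<Sum>t<T. if t \<in> selected_times N c u \<omega> then fir_out b N u w (int (t + n)) \<omega> else 0)
    = (\<Sum>m=1..N. b m * (\<Sum>t<T. of_bool (t mod (N + 2) \<in> {1..N})
          * (of_bool (c < u (int t) \<omega>) * u (int t + (int n - int m)) \<omega>)))
      + (\<Sum>t<T. of_bool (t mod (N + 2) \<in> {1..N}) * (of_bool (c < u (int t) \<omega>) * w (int t + int n) \<omega>))"
proof -
  define \<phi> :: "nat \<Rightarrow> real" where "\<phi> t = of_bool (t mod (N + 2) \<in> {1..N}) * of_bool (c < u (int t) \<omega>)" for t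
  have "(if t \<in> selected_times N c u \<omega> then fir_out b N u w (int (t + n)) \<omega> else 0)
      = \<phi> t * fir_out b N u w (int (t + n)) \<omega>" for t
    unfolding \<phi>_def of_bool_selected_times[symmetric] by simp
  also have "\<dots> t = (\<Sum>m=1..N. b m * (\<phi> t * u (int t + (int n - int m)) \<omega>)) + \<phi> t * w (int t + int n) \<omega>" for t
    by (simp add: fir_out_def sum_distrib_left algebra_simps)
  finally have "(\<Sum>t<T. if t \<in> selected_times N c u \<omega> then fir_out b N u w (int (t + n)) \<omega> else 0)
      = (\<Sum>t<T. \<Sum>m=1..N. b m * (\<phi> t * u (int t + (int n - int m)) \<omega>)) + (\<Sum>t<T. \<phi> t * w (int t + int n) \<omega>)"
    by (simp add: sum.distrib)
  also have "(\<Sum>t<T. \<Sum>m=1..N. b m * (\<phi> t * u (int t + (int n - int m)) \<omega>))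
      = (\<Sum>m=1..N. b m * (\<Sum>t<T. \<phi> t * u (int t + (int n - int m)) \<omega>))"
    by (subst sum.swap) (simp add: sum_distrib_left)
  finally show ?thesis
    by (simp add: \<phi>_def mult.assoc)
qed

lemma sum_if_eq_split:
  fixes b :: "nat \<Rightarrow> real"
  assumes "n \<in> A" "finite A"
  shows "(\<Sum>m\<in>A. b m * (if m = n then x else y)) = (x - y) * b n + y * (\<Sum>m\<in>A. b m)"
proof -
  have "(\<Sum>m\<in>A. b m * (if m = n then x else y)) = (\<Sum>m\<in>A. y * b m + (if m = n then (x - y) * b m else 0))"
    by (intro sum.cong) (auto simp: algebra_simps)
  then show ?thesis
    using assms by (simp add: sum.distrib sum_distrib_left)
qed

lemma selected_output_average_tendsto:
  fixes \<gamma> x xc :: real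
  assumes n: "n \<in> {1..N}"
    and u_lim: "\<And>k. \<bar>k\<bar> < int (N + 2) \<Longrightarrow> (\<lambda>T. (\<Sum>t<T. of_bool (t mod (N + 2) \<in> {1..N})
      * (of_bool (c < u (int t) \<omega>) * u (int t + k) \<omega>)) / T) \<longlonglongrightarrow> \<gamma> * (if k = 0 then xc else x)"
    and w_lim: "(\<lambda>T. (\<Sum>t<T. of_bool (t mod (N + 2) \<in> {1..N})
      * (of_bool (c < u (int t) \<omega>) * w (int t + int n) \<omega>)) / T) \<longlonglongrightarrow> 0"
  shows "(\<lambda>T. (\<Sum>t<T. if t \<in> selected_times N c u \<omega> then fir_out b N u w (int (t + n)) \<omega> else 0) / T)
    \<longlonglongrightarrow> \<gamma> * ((xc - x) * b n + x * (\<Sum>m=1..N. b m))"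
proof -
  define A where "A m T = (\<Sum>t<T. of_bool (t mod (N + 2) \<in> {1..N})
    * (of_bool (c < u (int t) \<omega>) * u (int t + (int n - int m)) \<omega>) :: real)" for m T
  define W where "W T = (\<Sum>t<T. of_bool (t mod (N + 2) \<in> {1..N})
    * (of_bool (c < u (int t) \<omega>) * w (int t + int n) \<omega>) :: real)" for T
  have "(\<Sum>t<T. if t \<in> selected_times N c u \<omega> then fir_out b N u w (int (t + n)) \<omega> else 0) / T
      = (\<Sum>m=1..N. b m * (A m T / T)) + W T / T" for T
    unfolding sum_selected_fir_out A_def[symmetric] W_def[symmetric]
    by (simp add: add_divide_distrib sum_divide_distrib)
  moreover have "(\<lambda>T. A m T / T) \<longlonglongrightarrow> \<gamma> * (if m = n then xc else x)" if "m \<in> {1..N}" for m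
    using u_lim[of "int n - int m"] n that unfolding A_def by (cases "m = n") auto
  then have "(\<lambda>T. (\<Sum>m=1..N. b m * (A m T / T)) + W T / T)
      \<longlonglongrightarrow> (\<Sum>m=1..N. b m * (\<gamma> * (if m = n then xc else x))) + 0"
    unfolding W_def by (intro tendsto_add tendsto_sum tendsto_mult tendsto_const w_lim)
  moreover have "(\<Sum>m=1..N. b m * (\<gamma> * (if m = n then xc else x))) = \<gamma> * ((xc - x) * b n + x * (\<Sum>m=1..N. b m))"
  proof -
    have "(\<Sum>m=1..N. b m * (\<gamma> * (if m = n then xc else x))) = \<gamma> * (\<Sum>m=1..N. b m * (if m = n then xc else x))"
      by (simp add: sum_distrib_left mult.left_commute)
    then show ?thesis
      using sum_if_eq_split[OF n, of b xc x] by simp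
  qed
  ultimately show ?thesis
    by simp
qed

context fir_system
begin

lemma expectation_exceed_u0:
  assumes "prob {\<omega> \<in> space M. c < u 0 \<omega>} > 0"
  shows "expectation (\<lambda>\<omega>. of_bool (c < u 0 \<omega>) * u 0 \<omega>)
    = prob {\<omega> \<in> space M. c < u 0 \<omega>} * cond_exp_gt M (u 0) c"
proof -
  have "expectation (\<lambda>\<omega>. of_bool (c < u 0 \<omega>) * u 0 \<omega>)
      = (LINT x|M. indicator {\<omega> \<in> space M. u 0 \<omega> > c} x * u 0 x)"
    by (intro Bochner_Integration.integral_cong) (auto simp: indicator_def)
  then show ?thesis
    using assms by (simp add: cond_exp_gt_def)
qed

lemma AE_selected_count_average:
  "AE \<omega> in M. (\<lambda>T. card (selected_times N c u \<omega> \<inter> {..<T}) / T)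
    \<longlonglongrightarrow> real N / real (N + 2) * prob {\<omega> \<in> space M. c < u 0 \<omega>}"
  using AE_exceed_average[of "N + 2" "\<lambda>r. of_bool (r \<in> {1..N})" c]
  by (simp only: real_card_Int_lessThan of_bool_selected_times sum_of_bool_residues)


lemma AE_selected_u_averages:
  assumes p: "prob {\<omega> \<in> space M. c < u 0 \<omega>} > 0"
  shows "AE \<omega> in M. \<forall>k::int. \<bar>k\<bar> < int (N + 2) \<longrightarrow>
    (\<lambda>T. (\<Sum>t<T. of_bool (t mod (N + 2) \<in> {1..N}) * (of_bool (c < u (int t) \<omega>) * u (int t + k) \<omega>)) / T)
    \<longlonglongrightarrow> real N / real (N + 2) * prob {\<omega> \<in> space M. c < u 0 \<omega>}
        * (if k = 0 then cond_exp_gt M (u 0) c else expectation (u 0))"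
  unfolding AE_all_countable
proof
  fix k :: int
  let ?\<phi> = "\<lambda>r. of_bool (r \<in> {1..N}) :: real"
  show "AE \<omega> in M. \<bar>k\<bar> < int (N + 2) \<longrightarrow>
    (\<lambda>T. (\<Sum>t<T. ?\<phi> (t mod (N + 2)) * (of_bool (c < u (int t) \<omega>) * u (int t + k) \<omega>)) / T)
    \<longlonglongrightarrow> real N / real (N + 2) * prob {\<omega> \<in> space M. c < u 0 \<omega>}
        * (if k = 0 then cond_exp_gt M (u 0) c else expectation (u 0))"
  proof (cases "k = 0")
    case True
    then show ?thesis
      using AE_exceed_u_average[where P="N + 2" and c=c and \<phi>="?\<phi>"]
      by (simp only: sum_of_bool_residues expectation_exceed_u0[OF p]) (simp add: mult.assoc)
  next
    case False
    have "\<bar>k\<bar> < int (N + 2) \<Longrightarrow> shift_index s (Inl 0) = Inl k \<Longrightarrow> \<bar>s\<bar> < int (N + 2)" for s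
      by simp
    then show ?thesis
      using AE_exceed_shifted_average[where P="N + 2" and i="Inl k" and c=c and \<phi>="?\<phi>"] False
      by (simp only: sum_of_bool_residues) (auto simp: expectation_u[of k] mult.assoc elim: AE_mp)
  qed
qed

lemma AE_selected_w_averages:
  "AE \<omega> in M. \<forall>k::int. (\<lambda>T. (\<Sum>t<T. of_bool (t mod (N + 2) \<in> {1..N})
    * (of_bool (c < u (int t) \<omega>) * w (int t + k) \<omega>)) / T) \<longlonglongrightarrow> 0"
  unfolding AE_all_countable
  using AE_exceed_shifted_average[where P="N + 2" and i="Inr _" and c=c and \<phi>="\<lambda>r. of_bool (r \<in> {1..N})"]
  by (simp only: sum_of_bool_residues) (simp add: expectation_w)

lemma AE_selected_output_average:
  assumes p: "prob {\<omega> \<in> space M. c < u 0 \<omega>} > 0"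
  shows "AE \<omega> in M. \<forall>n\<in>{1..N}.
    (\<lambda>T. (\<Sum>t<T. if t \<in> selected_times N c u \<omega> then fir_out b N u w (int (t + n)) \<omega> else 0) / T)
    \<longlonglongrightarrow> real N / real (N + 2) * prob {\<omega> \<in> space M. c < u 0 \<omega>}
        * ((cond_exp_gt M (u 0) c - expectation (u 0)) * b n + expectation (u 0) * (\<Sum>m=1..N. b m))"
  using AE_selected_u_averages[OF p, of N] AE_selected_w_averages[of N c]
proof eventually_elim
  case (elim \<omega>)
  show ?case
  proof
    fix n assume n: "n \<in> {1..N}"
    from selected_output_average_tendsto[where N=N and c=c and u=u and \<omega>=\<omega> and w=w and b=b,
        OF n elim(1)[rule_format] elim(2)[rule_format]]
    show "(\<lambda>T. (\<Sum>t<T. if t \<in> selected_times N c u \<omega> then fir_out b N u w (int (t + n)) \<omega> else 0) / T)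
      \<longlonglongrightarrow> real N / real (N + 2) * prob {\<omega> \<in> space M. c < u 0 \<omega>}
        * ((cond_exp_gt M (u 0) c - expectation (u 0)) * b n + expectation (u 0) * (\<Sum>m=1..N. b m))" .
  qed
qed

lemma AE_d_avg_tendsto:
  assumes N: "N \<ge> 1" and p: "prob {\<omega> \<in> space M. c < u 0 \<omega>} > 0"
  shows "AE \<omega> in M. \<forall>n\<in>{1..N}. (\<lambda>j. d_avg b N c u w n (N * j) \<omega>)
    \<longlonglongrightarrow> (cond_exp_gt M (u 0) c - expectation (u 0)) * b n + expectation (u 0) * (\<Sum>m=1..N. b m)"
  using AE_selected_count_average[where N=N and c=c] AE_selected_output_average[where N=N and b=b, OF p]
proof eventually_elim
  case (elim \<omega>)
  have \<gamma>: "real N / real (N + 2) * prob {\<omega> \<in> space M. c < u 0 \<omega>} > 0"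
    using N p by simp
  have N_lim: "filterlim (\<lambda>j. N * j) at_top sequentially"
    using N by (intro filterlim_subseq strict_monoI) simp
  show ?case
  proof
    fix n assume n: "n \<in> {1..N}"
    from average_enumerate_tendsto[OF elim(1) \<gamma> elim(2)[rule_format, OF n]]
    show "(\<lambda>j. d_avg b N c u w n (N * j) \<omega>)
      \<longlonglongrightarrow> (cond_exp_gt M (u 0) c - expectation (u 0)) * b n + expectation (u 0) * (\<Sum>m=1..N. b m)"
      unfolding d_avg_eq by (rule filterlim_compose[OF _ N_lim])
  qed
qed

lemma AE_selected_times_infinite:
  assumes "N \<ge> 1" and "prob {\<omega> \<in> space M. c < u 0 \<omega>} > 0"
  shows "AE \<omega> in M. infinite (selected_times N c u \<omega>)"
  using AE_selected_count_average[where N=N and c=c]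
proof eventually_elim
  case (elim \<omega>)
  show ?case
    by (rule infinite_if_count_average_pos[OF elim]) (use assms in simp)
qed

lemma AE_e1_avg_tendsto:
  assumes "N \<ge> 1" and "prob {\<omega> \<in> space M. c < u 0 \<omega>} > 0"
  shows "AE \<omega> in M. (\<lambda>j. e1_avg u (s_time N c u \<omega> j) \<omega>) \<longlonglongrightarrow> expectation (u 0)"
  using AE_u_average AE_selected_times_infinite[OF assms]
proof eventually_elim
  case (elim \<omega>)
  from filterlim_compose[OF elim(1) filterlim_s_time[OF assms(1) elim(2)]] show ?case
    by (simp add: e1_avg_eq)
qed

lemma AE_exceed_times_averages:
  assumes p: "prob {\<omega> \<in> space M. c < u 0 \<omega>} > 0"
  shows "AE \<omega> in M. (\<lambda>T. card (exceed_times c u \<omega> \<inter> {..<T}) / T) \<longlonglongrightarrow> prob {\<omega> \<in> space M. c < u 0 \<omega>}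
    \<and> (\<lambda>T. (\<Sum>t<T. if t \<in> exceed_times c u \<omega> then u (int t) \<omega> else 0) / T)
      \<longlonglongrightarrow> prob {\<omega> \<in> space M. c < u 0 \<omega>} * cond_exp_gt M (u 0) c"
proof -
  have one: "(0::nat) < 1"
    by simp
  from AE_exceed_average[OF one, where \<phi>="\<lambda>_. 1" and c=c]
    AE_exceed_u_average[OF one, where \<phi>="\<lambda>_. 1" and c=c]
  show ?thesis
  proof eventually_elim
    case (elim \<omega>)
    then have count: "(\<lambda>T. (\<Sum>t<T. of_bool (c < u (int t) \<omega>)) / T) \<longlonglongrightarrow> prob {\<omega> \<in> space M. c < u 0 \<omega>}"
      and sum: "(\<lambda>T. (\<Sum>t<T. of_bool (c < u (int t) \<omega>) * u (int t) \<omega>) / T)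
        \<longlonglongrightarrow> prob {\<omega> \<in> space M. c < u 0 \<omega>} * cond_exp_gt M (u 0) c"
      by (simp_all add: expectation_exceed_u0[OF p])
    have "eventually (\<lambda>t. of_bool (t \<in> exceed_times c u \<omega>) = (of_bool (c < u (int t) \<omega>) :: real)) sequentially"
      and "eventually (\<lambda>t. (if t \<in> exceed_times c u \<omega> then u (int t) \<omega> else 0)
        = of_bool (c < u (int t) \<omega>) * u (int t) \<omega>) sequentially"
      by (auto simp: eventually_sequentially exceed_times_def intro!: exI[of _ 1])
    from tendsto_add[OF this(1)[THEN average_diff_tendsto_zero] count]
      tendsto_add[OF this(2)[THEN average_diff_tendsto_zero] sum]
    show ?case
      by (simp add: real_card_Int_lessThan)
  qed
qed

lemma AE_e2_avg_tendsto:
  assumes N: "N \<ge> 1" and p: "prob {\<omega> \<in> space M. c < u 0 \<omega>} > 0"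
  shows "AE \<omega> in M. (\<lambda>j. e2_avg c u (k_count N c u \<omega> j) \<omega>) \<longlonglongrightarrow> cond_exp_gt M (u 0) c"
  using AE_exceed_times_averages[OF p] AE_selected_times_infinite[OF assms]
proof eventually_elim
  case (elim \<omega>)
  then have "infinite (exceed_times c u \<omega>)"
    using infinite_if_count_average_pos p by blast
  then have "filterlim (k_count N c u \<omega>) at_top sequentially"
    unfolding k_count_eq
    using filterlim_compose[OF filterlim_Suc filterlim_s_time[OF N elim(2)]]
    by (intro filterlim_compose[OF filterlim_card_Int_lessThan]) simp_all
  with elim(1) p show ?case
    unfolding e2_avg_eq by (intro filterlim_compose[OF average_enumerate_tendsto]) auto
qed

end

lemma tendsto_zero_if_summable_square:
  fixes \<alpha> :: "nat \<Rightarrow> real"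
  assumes "summable (\<lambda>j. (\<alpha> j)\<^sup>2)"
  shows "\<alpha> \<longlonglongrightarrow> 0"
proof -
  have "(\<lambda>j. sqrt ((\<alpha> j)\<^sup>2)) \<longlonglongrightarrow> sqrt 0"
    using summable_LIMSEQ_zero[OF assms] by (rule tendsto_real_sqrt)
  then show ?thesis
    by (simp add: tendsto_rabs_zero_iff)
qed

lemma bhat_tendsto_if_averages_tendsto:
  fixes sg :: "real \<Rightarrow> real" and \<alpha> :: "nat \<Rightarrow> real"
  assumes sa_hat_lim: "\<And>x L. x \<longlonglongrightarrow> L \<Longrightarrow> (\<lambda>j. sa_hat sg \<alpha> x j) \<longlonglongrightarrow> L"
    and d_lim: "\<forall>n\<in>{1..N}. (\<lambda>j. d_avg b N c u w n (N * j) \<omega>) \<longlonglongrightarrow> (\<mu>c - \<mu>) * b n + \<mu> * (\<Sum>m=1..N. b m)"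
    and e1_lim: "(\<lambda>j. e1_avg u (s_time N c u \<omega> j) \<omega>) \<longlonglongrightarrow> \<mu>"
    and e2_lim: "(\<lambda>j. e2_avg c u (k_count N c u \<omega> j) \<omega>) \<longlonglongrightarrow> \<mu>c"
    and c1: "\<mu>c \<noteq> \<mu>" and c2: "\<mu>c \<noteq> (1 - real N) * \<mu>"
  shows "\<forall>n\<in>{1..N}. (\<lambda>j. bhat sg \<alpha> b N c u w n j \<omega>) \<longlonglongrightarrow> b n"
proof
  fix n assume n: "n \<in> {1..N}"
  show "(\<lambda>j. bhat sg \<alpha> b N c u w n j \<omega>) \<longlonglongrightarrow> b n"
  proof (rule bhat_tendsto[OF _ _ _ c1 c2 n])
    show "(\<lambda>j. dhat sg \<alpha> b N c u w m j \<omega>) \<longlonglongrightarrow> (\<mu>c - \<mu>) * b m + \<mu> * (\<Sum>m=1..N. b m)"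
      if "m \<in> {1..N}" for m
      unfolding dhat_def using d_lim that by (auto intro: sa_hat_lim)
    show "(\<lambda>j. e1hat sg \<alpha> N c u j \<omega>) \<longlonglongrightarrow> \<mu>"
      unfolding e1hat_def by (rule sa_hat_lim[OF e1_lim])
    show "(\<lambda>j. e2hat sg \<alpha> N c u j \<omega>) \<longlonglongrightarrow> \<mu>c"
      unfolding e2hat_def by (rule sa_hat_lim[OF e2_lim])
  qed
qed

theorem theorem4:
  fixes M :: "'a measure" and u w :: "int \<Rightarrow> 'a \<Rightarrow> real"
    and b :: "nat \<Rightarrow> real" and N :: nat and c :: real
    and \<alpha> :: "nat \<Rightarrow> real" and sg :: "real \<Rightarrow> real"
  assumes "prob_space M"
    and indep: "prob_space.indep_vars M (\<lambda>_. borel)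
                 (\<lambda>i. case i of Inl t \<Rightarrow> u t | Inr t \<Rightarrow> w t) (UNIV :: (int + int) set)"
    and u_id: "\<And>t. distr M borel (u t) = distr M borel (u 0)"
    and w_id: "\<And>t. distr M borel (w t) = distr M borel (w 0)"
    and w_int: "integrable M (w 0)" and w_mean: "(LINT x|M. w 0 x) = 0"
    and u_int: "integrable M (u 0)"
    and c_pos: "measure M {\<omega> \<in> space M. u 0 \<omega> > c} > 0"
    and c1: "cond_exp_gt M (u 0) c \<noteq> (LINT x|M. u 0 x)"
    and c2: "cond_exp_gt M (u 0) c \<noteq> (1 - real N) * (LINT x|M. u 0 x)"
    and \<alpha>_pos: "\<And>j. j \<ge> 1 \<Longrightarrow> \<alpha> j > 0"
    and \<alpha>_div: "\<not> summable \<alpha>"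
    and \<alpha>_sq: "summable (\<lambda>j. (\<alpha> j)\<^sup>2)"
    and sg_neg: "\<And>x. x < 0 \<Longrightarrow> sg x = -1"
    and sg_pos: "\<And>x. x > 0 \<Longrightarrow> sg x = 1"
    and sg_0: "sg 0 \<in> {-1, 0, 1}"
  shows "AE \<omega> in M. \<forall>n \<in> {1..N}. (\<lambda>j. bhat sg \<alpha> b N c u w n j \<omega>) \<longlonglongrightarrow> b n"
proof (cases "N = 0")
  case False
  then have N: "N \<ge> 1"
    by simp
  interpret fir_system M u w
    using assms(1-7) by (simp add: fir_system_def fir_system_axioms_def)
  have sg_signs: "\<forall>z<0. sg z = -1" "\<forall>z>0. sg z = 1"
    using sg_neg sg_pos by auto
  have sa_hat_lim: "(\<lambda>j. sa_hat sg \<alpha> x j) \<longlonglongrightarrow> L" if "x \<longlonglongrightarrow> L" for x L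
    using sa_hat_tendsto[where \<alpha>=\<alpha> and sg=sg, OF that \<alpha>_pos tendsto_zero_if_summable_square[OF \<alpha>_sq]
        \<alpha>_div sg_signs sg_0] .
  from AE_d_avg_tendsto[OF N c_pos, of b] AE_e1_avg_tendsto[OF N c_pos] AE_e2_avg_tendsto[OF N c_pos]
  show ?thesis
    by eventually_elim (rule bhat_tendsto_if_averages_tendsto[OF sa_hat_lim _ _ _ c1 c2])
qed simp

end
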